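(* In the setting of the context, fix a round $t$ and suppose $\frac12-9L^2\eta_t^2K^2N\sum_{i=1}^Np_i^2\ge C>0$ and $\frac{L\eta_t^2K}{2}-\frac{\eta_t}{2}\le0$. Under (A1)–(A3), $$\mathbb{E}f(V_{t+1})\le\mathbb{E}f(W_t)-C\eta_tK\,\mathbb{E}\|\nabla f(W_t)\|^2+\frac32L^2\eta_t^3K^2N(\sigma_l^2+6K\sigma_g^2)\sum_{i=1}^Np_i^2+\frac{L\eta_t^2K^2N}{2}\sigma_l^2\sum_{i=1}^Np_i^2.$$
   Context: Fix integers $N,K\ge1$; matrices in $\mathbb{R}^{d\times k}$ with Frobenius norm $\|\cdot\|$. Client losses $f_i$ are differentiable, $p_i\ge0$ with $\sum_ip_i=1$, $f=\sum_ip_if_i$. Stochastic gradients $\tilde\nabla f_i(W)$ use fresh randomness per call. (A1) $f$, each $f_i$ and each per-sample loss have $L$-Lipschitz gradients. (A2) Conditionally on the past, $\mathbb{E}\tilde\nabla f_i(W)=\nabla f_i(W)$, $\mathbb{E}\|\tilde\nabla f_i(W)-\nabla f_i(W)\|^2\le\sigma_l^2$. (A3) $\mathbb{E}\|\nabla f(W)-\nabla f_i(W)\|^2\le\sigma_g^2$ for all $W,i$, $\sigma_g^2>0$. $W_t$ is the (random) global model at round $t$ of the FedHL scheme. Auxiliary full-rank iterate: $W^i_{t,0}=W_t$, $W^i_{t,\tau+1}=W^i_{t,\tau}-\eta_t\tilde\nabla f_i(W^i_{t,\tau})$ for $\tau=0,\dots,K-1$, and $V_{t+1}=\sum_ip_i\big(W_t-\eta_t\sum_{\tau=0}^{K-1}\tilde\nabla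 f_i(W^i_{t,\tau})\big)$. *)

theory Defs
  imports "HOL-Analysis.Analysis" "HOL-Probability.Probability"
begin

(* Matrices in R^{d x k} are modelled as real^'k^'d; the HOL-Analysis norm on this
   type is the Euclidean norm of all entries, i.e. the Frobenius norm.

   Randomness: a probability space M; the global model W_t is a random variable
   Wt :: 'w => real^'k^'d; the fresh randomness used by the tau-th stochastic
   gradient call of client i is xi i tau :: 'w => 'x (values in the measurable
   space X); the stochastic gradient of client i at W with sample x is G i W x. *)

fun loc_iter :: "(nat \<Rightarrow> real^'k^'d \<Rightarrow> 'x \<Rightarrow> real^'k^'d) \<Rightarrow> real \<Rightarrow> ('w \<Rightarrow> real^'k^'d)
    \<Rightarrow> (nat \<Rightarrow> nat \<Rightarrow> 'w \<Rightarrow> 'x) \<Rightarrow> nat \<Rightarrow> nat \<Rightarrow> 'w \<Rightarrow> real^'k^'d" where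
  "loc_iter G eta Wt xi i 0 \<omega> = Wt \<omega>"
| "loc_iter G eta Wt xi i (Suc \<tau>) \<omega> =
     loc_iter G eta Wt xi i \<tau> \<omega> - eta *\<^sub>R G i (loc_iter G eta Wt xi i \<tau> \<omega>) (xi i \<tau> \<omega>)"

definition V_next :: "(nat \<Rightarrow> real^'k^'d \<Rightarrow> 'x \<Rightarrow> real^'k^'d) \<Rightarrow> real \<Rightarrow> ('w \<Rightarrow> real^'k^'d)
    \<Rightarrow> (nat \<Rightarrow> nat \<Rightarrow> 'w \<Rightarrow> 'x) \<Rightarrow> (nat \<Rightarrow> real) \<Rightarrow> nat \<Rightarrow> nat \<Rightarrow> 'w \<Rightarrow> real^'k^'d" where
  "V_next G eta Wt xi p N K \<omega> =
     (\<Sum>i\<in>{1..N}. p i *\<^sub>R (Wt \<omega> - eta *\<^sub>R (\<Sum>\<tau><K. G i (loc_iter G eta Wt xi i \<tau> \<omega>) (xi i \<tau> \<omega>))))"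

definition past :: "'w measure \<Rightarrow> ('w \<Rightarrow> real^'k^'d) \<Rightarrow> 'x measure
    \<Rightarrow> (nat \<Rightarrow> nat \<Rightarrow> 'w \<Rightarrow> 'x) \<Rightarrow> nat \<Rightarrow> nat \<Rightarrow> 'w measure" where
  "past M Wt X xi i \<tau> =
     vimage_algebra (space M) (\<lambda>\<omega>. (Wt \<omega>, \<lambda>s\<in>{..<\<tau>}. xi i s \<omega>))
       (borel \<Otimes>\<^sub>M (\<Pi>\<^sub>M s\<in>{..<\<tau>}. X))"

end

theory Submission
  imports Defs
begin

text \<open>
  Write \<open>V\<^sub>t\<^sub>+\<^sub>1 = W\<^sub>t - \<eta> \<Delta>\<close>, with \<open>\<Delta>\<close> the \<open>p\<close>-weighted sum of all local stochastic gradients,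
  and apply the descent lemma of the \<open>L\<close>-smooth \<open>f\<close>. In expectation, conditional unbiasedness
  replaces the stochastic gradients in \<open>\<langle>\<nabla>f(W\<^sub>t), \<Delta>\<rangle>\<close> by the true local gradients, and polarization
  splits \<open>-\<langle>\<nabla>f(W\<^sub>t), \<Sigma>\<^sub>i p\<^sub>i \<nabla>F\<^sub>i(W\<^sup>i\<^sub>\<tau>)\<rangle>\<close> into \<open>-\<parallel>\<nabla>f(W\<^sub>t)\<parallel>\<^sup>2/2\<close>, half the deviation
  \<open>\<parallel>\<nabla>f(W\<^sub>t) - \<Sigma>\<^sub>i p\<^sub>i \<nabla>F\<^sub>i(W\<^sup>i\<^sub>\<tau>)\<parallel>\<^sup>2\<close>, and a negative term that absorbs the gradient part of
  \<open>\<parallel>\<Delta>\<parallel>\<^sup>2\<close> once \<open>L \<eta> K \<le> 1/4\<close>. Smoothness bounds the deviation by the local drift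
  \<open>\<Sigma>\<^sub>i \<Sigma>\<^sub>\<tau> \<parallel>W\<^sup>i\<^sub>\<tau> - W\<^sub>t\<parallel>\<^sup>2\<close>. The gradient noises are martingale differences, so their second
  moments add up to at most \<open>K \<sigma>\<^sub>l\<^sup>2\<close> per client; this gives a self-referential bound on the drift,
  which closes because the first step-size condition and \<open>N \<Sigma>\<^sub>i p\<^sub>i\<^sup>2 \<ge> 1\<close> yield \<open>18 (L \<eta> K)\<^sup>2 \<le> 1\<close>.
\<close>

lemma lipschitz_gradient_quadratic_bound:
  fixes f :: "'a::real_inner \<Rightarrow> real" and gf :: "'a \<Rightarrow> 'a"
  assumes grad: "\<And>x. (f has_derivative (\<lambda>h. gf x \<bullet> h)) (at x)"
    and lip: "\<And>x y. norm (gf x - gf y) \<le> L * norm (x - y)"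
  shows "\<bar>f y - f x - gf x \<bullet> (y - x)\<bar> \<le> L / 2 * (norm (y - x))\<^sup>2"
proof -
  define h where "h = y - x"
  have deriv: "((\<lambda>t. f (x + t *\<^sub>R h)) has_real_derivative (gf (x + t *\<^sub>R h) \<bullet> h)) (at t)" for t
  proof -
    have "((\<lambda>t. x + t *\<^sub>R h) has_derivative (\<lambda>s. s *\<^sub>R h)) (at t)"
      by (auto intro!: derivative_eq_intros)
    from has_derivative_compose[OF this grad]
    show ?thesis
      unfolding has_field_derivative_def by (rule has_derivative_eq_rhs) (auto simp: fun_eq_iff)
  qed
  have slope: "\<bar>gf (x + t *\<^sub>R h) \<bullet> h - gf x \<bullet> h\<bar> \<le> L * \<bar>t\<bar> * (norm h)\<^sup>2" for t
  proof -
    have "\<bar>(gf (x + t *\<^sub>R h) - gf x) \<bullet> h\<bar> \<le> norm (gf (x + t *\<^sub>R h) - gf x) * norm h"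
      by (rule Cauchy_Schwarz_ineq2)
    also have "\<dots> \<le> L * norm (t *\<^sub>R h) * norm h"
      using lip[of "x + t *\<^sub>R h" x] by (simp add: mult_right_mono)
    finally show ?thesis by (simp add: power2_eq_square mult.assoc inner_diff_left)
  qed
  txt \<open>By the mean value theorem and the slope bound, \<open>P\<close> below is nondecreasing on \<open>[0, 1]\<close>
    for both signs \<open>s = \<plusminus>1\<close>.\<close>
  have "s * (f y - f x - gf x \<bullet> h) \<ge> - L / 2 * (norm h)\<^sup>2" if s: "s = 1 \<or> s = -1" for s :: real
  proof -
    define P where "P t = s * (f (x + t *\<^sub>R h) - t * (gf x \<bullet> h)) + L / 2 * t\<^sup>2 * (norm h)\<^sup>2" for t
    have P': "(P has_real_derivative
        s * (gf (x + t *\<^sub>R h) \<bullet> h - gf x \<bullet> h) + L * t * (norm h)\<^sup>2) (at t)" for t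
      unfolding P_def by (rule derivative_eq_intros deriv refl | simp)+
    obtain z where z: "0 < z" "z < 1"
      and mvt: "P 1 - P 0 = (1 - 0) * (s * (gf (x + z *\<^sub>R h) \<bullet> h - gf x \<bullet> h) + L * z * (norm h)\<^sup>2)"
      using MVT2[of 0 1 P "\<lambda>t. s * (gf (x + t *\<^sub>R h) \<bullet> h - gf x \<bullet> h) + L * t * (norm h)\<^sup>2"] P'
      by auto
    have "s * (gf (x + z *\<^sub>R h) \<bullet> h - gf x \<bullet> h) \<ge> - (L * z * (norm h)\<^sup>2)"
      using slope[of z] z s by (auto simp: abs_le_iff)
    then have "P 1 \<ge> P 0" using mvt by simp
    moreover have "x + h = y" unfolding h_def by simp
    ultimately show ?thesis unfolding P_def by (simp add: algebra_simps)
  qed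
  from this[of 1] this[of "-1"] show ?thesis
    unfolding h_def abs_le_iff by (simp add: algebra_simps)
qed

lemma norm_add_squared: "(norm (a + b))\<^sup>2 = (norm a)\<^sup>2 + 2 * (a \<bullet> b) + (norm b)\<^sup>2"
  for a b :: "'a::real_inner"
  by (simp add: power2_norm_eq_inner algebra_simps inner_commute)

lemma norm_sum_scaleR_squared_le:
  fixes x :: "'i \<Rightarrow> 'a::real_normed_vector"
  shows "(norm (\<Sum>i\<in>I. c i *\<^sub>R x i))\<^sup>2 \<le> (\<Sum>i\<in>I. (c i)\<^sup>2) * (\<Sum>i\<in>I. (norm (x i))\<^sup>2)"
proof -
  have "norm (\<Sum>i\<in>I. c i *\<^sub>R x i) \<le> (\<Sum>i\<in>I. \<bar>c i\<bar> * norm (x i))"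
    by (rule order_trans[OF norm_sum]) simp
  then have "(norm (\<Sum>i\<in>I. c i *\<^sub>R x i))\<^sup>2 \<le> (\<Sum>i\<in>I. \<bar>c i\<bar> * norm (x i))\<^sup>2"
    by (simp add: power_mono)
  also have "\<dots> \<le> (\<Sum>i\<in>I. \<bar>c i\<bar>\<^sup>2) * (\<Sum>i\<in>I. (norm (x i))\<^sup>2)"
    by (rule Cauchy_Schwarz_ineq_sum)
  finally show ?thesis by simp
qed

lemma norm_sum_squared_le_card:
  fixes x :: "'i \<Rightarrow> 'a::real_normed_vector"
  shows "(norm (\<Sum>i\<in>I. x i))\<^sup>2 \<le> card I * (\<Sum>i\<in>I. (norm (x i))\<^sup>2)"
  using norm_sum_scaleR_squared_le[of "\<lambda>_. 1" x I] by simp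

lemma norm_add_squared_le_weighted:
  fixes a b :: "'a::real_inner"
  assumes "c > 0"
  shows "(norm (a + b))\<^sup>2 \<le> (1 + c) * (norm a)\<^sup>2 + (1 + 1 / c) * (norm b)\<^sup>2"
proof -
  have "2 * (a \<bullet> b) \<le> 2 * (norm a * norm b)"
    using Cauchy_Schwarz_ineq2[of a b] by simp
  also have "\<dots> \<le> c * (norm a)\<^sup>2 + 1 / c * (norm b)\<^sup>2"
  proof -
    have "0 \<le> (c * norm a - norm b)\<^sup>2 / c" using assms by simp
    also have "\<dots> = c * (norm a)\<^sup>2 + 1 / c * (norm b)\<^sup>2 - 2 * (norm a * norm b)"
      using assms by (simp add: field_simps power2_eq_square)
    finally show ?thesis by simp
  qed
  finally show ?thesis by (simp add: norm_add_squared algebra_simps)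
qed

lemma norm_add_squared_le: "(norm (a + b))\<^sup>2 \<le> 2 * (norm a)\<^sup>2 + 2 * (norm b)\<^sup>2"
  for a b :: "'a::real_inner"
  using norm_add_squared_le_weighted[of 1 a b] by simp

lemma norm_add3_squared_le:
  "(norm (a + b + c))\<^sup>2 \<le> 3 * (norm a)\<^sup>2 + 3 * (norm b)\<^sup>2 + 3 * (norm c)\<^sup>2"
  for a b c :: "'a::real_inner"
proof -
  have "(norm (a + b + c))\<^sup>2 \<le> (3/2) * (norm (a + b))\<^sup>2 + 3 * (norm c)\<^sup>2"
    using norm_add_squared_le_weighted[of "1/2" "a + b" c] by simp
  also have "\<dots> \<le> (3/2) * (2 * (norm a)\<^sup>2 + 2 * (norm b)\<^sup>2) + 3 * (norm c)\<^sup>2"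
    using norm_add_squared_le[of a b] by simp
  finally show ?thesis by (simp add: algebra_simps)
qed

definition square_integrable :: "'a measure \<Rightarrow> ('a \<Rightarrow> 'b::euclidean_space) \<Rightarrow> bool" where
  "square_integrable M Y \<longleftrightarrow> Y \<in> borel_measurable M \<and> integrable M (\<lambda>\<omega>. (norm (Y \<omega>))\<^sup>2)"

lemma square_integrableD:
  assumes "square_integrable M Y"
  shows square_integrable_measurable: "Y \<in> borel_measurable M"
    and square_integrable_norm_squared: "integrable M (\<lambda>\<omega>. (norm (Y \<omega>))\<^sup>2)"
  using assms by (simp_all add: square_integrable_def)

lemma square_integrable_dominated:
  assumes "Y \<in> borel_measurable M" "integrable M h" "\<And>\<omega>. (norm (Y \<omega>))\<^sup>2 \<le> h \<omega>"
  shows "square_integrable M Y"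
  unfolding square_integrable_def
proof (intro conjI assms(1))
  show "integrable M (\<lambda>\<omega>. (norm (Y \<omega>))\<^sup>2)"
    by (rule Bochner_Integration.integrable_bound[OF assms(2)])
       (use assms in \<open>auto intro!: AE_I2 intro: order_trans[OF assms(3) abs_ge_self]\<close>)
qed

lemma square_integrable_zero: "square_integrable M (\<lambda>\<omega>. 0)"
  by (simp add: square_integrable_def)

lemma square_integrable_add:
  "square_integrable M X \<Longrightarrow> square_integrable M Y \<Longrightarrow> square_integrable M (\<lambda>\<omega>. X \<omega> + Y \<omega>)"
  by (rule square_integrable_dominated[where h="\<lambda>\<omega>. 2 * (norm (X \<omega>))\<^sup>2 + 2 * (norm (Y \<omega>))\<^sup>2"])
     (auto simp: square_integrable_def norm_add_squared_le)

lemma square_integrable_scaleR: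
  "square_integrable M X \<Longrightarrow> square_integrable M (\<lambda>\<omega>. c *\<^sub>R X \<omega>)"
  by (rule square_integrable_dominated[where h="\<lambda>\<omega>. c\<^sup>2 * (norm (X \<omega>))\<^sup>2"])
     (auto simp: square_integrable_def power_mult_distrib)

lemma square_integrable_uminus: "square_integrable M X \<Longrightarrow> square_integrable M (\<lambda>\<omega>. - X \<omega>)"
  using square_integrable_scaleR[of M X "-1"] by simp

lemma square_integrable_diff:
  "square_integrable M X \<Longrightarrow> square_integrable M Y \<Longrightarrow> square_integrable M (\<lambda>\<omega>. X \<omega> - Y \<omega>)"
  using square_integrable_add[of M X "\<lambda>\<omega>. - Y \<omega>"] square_integrable_uminus[of M Y] by simp

lemma square_integrable_sum:
  "finite I \<Longrightarrow> (\<And>i. i \<in> I \<Longrightarrow> square_integrable M (X i))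
    \<Longrightarrow> square_integrable M (\<lambda>\<omega>. \<Sum>i\<in>I. X i \<omega>)"
  by (induction I rule: finite_induct) (auto intro: square_integrable_add square_integrable_zero)

lemma square_integrable_norm_le:
  "Y \<in> borel_measurable M \<Longrightarrow> square_integrable M Z \<Longrightarrow> (\<And>\<omega>. norm (Y \<omega>) \<le> norm (Z \<omega>))
    \<Longrightarrow> square_integrable M Y"
  by (rule square_integrable_dominated[where h="\<lambda>\<omega>. (norm (Z \<omega>))\<^sup>2"])
     (auto simp: square_integrable_def power_mono)

lemma (in finite_measure) square_integrable_bounded:
  "Y \<in> borel_measurable M \<Longrightarrow> (\<And>\<omega>. (norm (Y \<omega>))\<^sup>2 \<le> c) \<Longrightarrow> square_integrable M Y"
  by (rule square_integrable_dominated[where h="\<lambda>_. c"]) auto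

lemma integrable_inner_square_integrable:
  assumes X: "square_integrable M X" and Y: "square_integrable M Y"
  shows "integrable M (\<lambda>\<omega>. X \<omega> \<bullet> Y \<omega>)"
proof (rule Bochner_Integration.integrable_bound)
  show "integrable M (\<lambda>\<omega>. (norm (X \<omega>))\<^sup>2 + (norm (Y \<omega>))\<^sup>2)"
    using X Y by (auto simp: square_integrable_def)
  show "(\<lambda>\<omega>. X \<omega> \<bullet> Y \<omega>) \<in> borel_measurable M"
    using X Y by (auto simp: square_integrable_def)
  have "\<bar>X \<omega> \<bullet> Y \<omega>\<bar> \<le> (norm (X \<omega>))\<^sup>2 + (norm (Y \<omega>))\<^sup>2" for \<omega>
  proof -
    have "\<bar>X \<omega> \<bullet> Y \<omega>\<bar> \<le> norm (X \<omega>) * norm (Y \<omega>)"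
      by (rule Cauchy_Schwarz_ineq2)
    also have "\<dots> \<le> (norm (X \<omega>))\<^sup>2 + (norm (Y \<omega>))\<^sup>2"
      using sum_squares_bound[of "norm (X \<omega>)" "norm (Y \<omega>)"]
        mult_nonneg_nonneg[OF norm_ge_zero norm_ge_zero, of "X \<omega>" "Y \<omega>"] by linarith
    finally show ?thesis .
  qed
  then show "AE \<omega> in M. norm (X \<omega> \<bullet> Y \<omega>) \<le> norm ((norm (X \<omega>))\<^sup>2 + (norm (Y \<omega>))\<^sup>2)"
    by simp
qed

lemma integral_inner_polarize:
  assumes X: "square_integrable M X" and Y: "square_integrable M Y"
  shows "(\<integral>\<omega>. X \<omega> \<bullet> Y \<omega> \<partial>M) = ((\<integral>\<omega>. (norm (X \<omega>))\<^sup>2 \<partial>M) + (\<integral>\<omega>. (norm (Y \<omega>))\<^sup>2 \<partial>M)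
     - (\<integral>\<omega>. (norm (X \<omega> - Y \<omega>))\<^sup>2 \<partial>M)) / 2"
proof -
  have "(\<integral>\<omega>. X \<omega> \<bullet> Y \<omega> \<partial>M)
      = (\<integral>\<omega>. ((norm (X \<omega>))\<^sup>2 + (norm (Y \<omega>))\<^sup>2 - (norm (X \<omega> - Y \<omega>))\<^sup>2) / 2 \<partial>M)"
    by (simp only: dot_norm_neg)
  also have "\<dots> = ((\<integral>\<omega>. (norm (X \<omega>))\<^sup>2 \<partial>M) + (\<integral>\<omega>. (norm (Y \<omega>))\<^sup>2 \<partial>M)
     - (\<integral>\<omega>. (norm (X \<omega> - Y \<omega>))\<^sup>2 \<partial>M)) / 2"
    using X Y square_integrable_diff[OF X Y] by (simp add: square_integrable_def)
  finally show ?thesis .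
qed

lemma integral_norm_sum_squared_orthogonal:
  fixes Z :: "nat \<Rightarrow> 'a \<Rightarrow> 'b::euclidean_space"
  assumes Z: "\<And>s. s < n \<Longrightarrow> square_integrable M (Z s)"
    and orth: "\<And>s. s < n \<Longrightarrow> (\<integral>\<omega>. (\<Sum>r<s. Z r \<omega>) \<bullet> Z s \<omega> \<partial>M) = 0"
  shows "(\<integral>\<omega>. (norm (\<Sum>s<n. Z s \<omega>))\<^sup>2 \<partial>M) = (\<Sum>s<n. \<integral>\<omega>. (norm (Z s \<omega>))\<^sup>2 \<partial>M)"
  using assms
proof (induction n)
  case 0
  then show ?case by simp
next
  case (Suc n)
  define S where "S \<omega> = (\<Sum>r<n. Z r \<omega>)" for \<omega>
  have S: "square_integrable M S"
    unfolding S_def by (intro square_integrable_sum Suc.prems) auto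
  have Zn: "square_integrable M (Z n)" by (rule Suc.prems) simp
  have "(\<integral>\<omega>. (norm (\<Sum>s<Suc n. Z s \<omega>))\<^sup>2 \<partial>M)
      = (\<integral>\<omega>. (norm (S \<omega>))\<^sup>2 + 2 * (S \<omega> \<bullet> Z n \<omega>) + (norm (Z n \<omega>))\<^sup>2 \<partial>M)"
    by (simp add: S_def norm_add_squared)
  also have "\<dots> = (\<integral>\<omega>. (norm (S \<omega>))\<^sup>2 \<partial>M) + 2 * (\<integral>\<omega>. S \<omega> \<bullet> Z n \<omega> \<partial>M)
      + (\<integral>\<omega>. (norm (Z n \<omega>))\<^sup>2 \<partial>M)"
    using S Zn integrable_inner_square_integrable[OF S Zn] by (simp add: square_integrable_def)
  also have "(\<integral>\<omega>. S \<omega> \<bullet> Z n \<omega> \<partial>M) = 0"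
    unfolding S_def by (rule Suc.prems) simp
  finally show ?case using Suc by (simp add: S_def)
qed

lemma (in sigma_finite_subalgebra) integral_inner_eq_of_cond_exp_inner:
  fixes g D Y :: "'a \<Rightarrow> 'b::euclidean_space"
  assumes g: "square_integrable M g" and D: "square_integrable M D"
    and Y: "square_integrable M Y" and Y_F: "Y \<in> borel_measurable F"
    and cond: "\<And>v. AE \<omega> in M. real_cond_exp M F (\<lambda>\<omega>. g \<omega> \<bullet> v) \<omega> = D \<omega> \<bullet> v"
  shows "(\<integral>\<omega>. Y \<omega> \<bullet> g \<omega> \<partial>M) = (\<integral>\<omega>. Y \<omega> \<bullet> D \<omega> \<partial>M)"
proof -
  have Yb: "square_integrable M (\<lambda>\<omega>. (Y \<omega> \<bullet> b) *\<^sub>R b)" if b: "b \<in> Basis" for b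
    by (rule square_integrable_norm_le[OF _ Y])
       (use b square_integrable_measurable[OF Y] Basis_le_norm in auto)
  have int: "integrable M (\<lambda>\<omega>. (Y \<omega> \<bullet> b) * (Z \<omega> \<bullet> b))"
    if b: "b \<in> Basis" and Z: "square_integrable M Z" for b and Z :: "'a \<Rightarrow> 'b"
    using integrable_inner_square_integrable[OF Yb[OF b] Z] by (simp add: inner_commute)
  have component: "(\<integral>\<omega>. (Y \<omega> \<bullet> b) * (g \<omega> \<bullet> b) \<partial>M) = (\<integral>\<omega>. (Y \<omega> \<bullet> b) * (D \<omega> \<bullet> b) \<partial>M)"
    if b: "b \<in> Basis" for b
  proof -
    have gm: "g \<in> borel_measurable M" "D \<in> borel_measurable M" "Y \<in> borel_measurable M"
      using g D Y by (simp_all add: square_integrable_def)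
    have Yb_F: "(\<lambda>\<omega>. Y \<omega> \<bullet> b) \<in> borel_measurable F" using Y_F by measurable
    have gb: "(\<lambda>\<omega>. g \<omega> \<bullet> b) \<in> borel_measurable M" using gm by measurable
    have "(\<integral>\<omega>. (Y \<omega> \<bullet> b) * (g \<omega> \<bullet> b) \<partial>M)
        = (\<integral>\<omega>. (Y \<omega> \<bullet> b) * real_cond_exp M F (\<lambda>\<omega>. g \<omega> \<bullet> b) \<omega> \<partial>M)"
      using real_cond_exp_intg(2)[OF int[OF b g] Yb_F gb] by simp
    also have "\<dots> = (\<integral>\<omega>. (Y \<omega> \<bullet> b) * (D \<omega> \<bullet> b) \<partial>M)"
    proof (rule integral_cong_AE)
      show "(\<lambda>\<omega>. (Y \<omega> \<bullet> b) * real_cond_exp M F (\<lambda>\<omega>. g \<omega> \<bullet> b) \<omega>) \<in> borel_measurable M"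
        using gm borel_measurable_cond_exp2 by measurable
      show "(\<lambda>\<omega>. (Y \<omega> \<bullet> b) * (D \<omega> \<bullet> b)) \<in> borel_measurable M"
        using gm by measurable
      show "AE \<omega> in M. (Y \<omega> \<bullet> b) * real_cond_exp M F (\<lambda>\<omega>. g \<omega> \<bullet> b) \<omega> = (Y \<omega> \<bullet> b) * (D \<omega> \<bullet> b)"
        using cond[of b] by eventually_elim simp
    qed
    finally show ?thesis .
  qed
  have "(\<integral>\<omega>. Y \<omega> \<bullet> Z \<omega> \<partial>M) = (\<Sum>b\<in>Basis. \<integral>\<omega>. (Y \<omega> \<bullet> b) * (Z \<omega> \<bullet> b) \<partial>M)"
    if Z: "square_integrable M Z" for Z :: "'a \<Rightarrow> 'b"
    by (subst euclidean_inner, rule Bochner_Integration.integral_sum) (use int Z in auto)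
  from this[OF g] this[OF D] component show ?thesis by simp
qed

lemma (in prob_space) integral_le_of_cond_exp_le:
  assumes "sigma_finite_subalgebra M F" and h: "integrable M h"
    and "AE \<omega> in M. real_cond_exp M F h \<omega> \<le> c"
  shows "(\<integral>\<omega>. h \<omega> \<partial>M) \<le> c"
proof -
  interpret sigma_finite_subalgebra M F by fact
  have "(\<integral>\<omega>. h \<omega> \<partial>M) = (\<integral>\<omega>. real_cond_exp M F h \<omega> \<partial>M)"
    using real_cond_exp_int(2)[OF h] by simp
  also have "\<dots> \<le> (\<integral>\<omega>. c \<partial>M)"
    by (rule integral_mono_AE[OF real_cond_exp_int(1)[OF h]]) (use assms in auto)
  finally show ?thesis by (simp add: prob_space)
qed

locale fedhl_round =
  fixes M :: "'w measure" and X :: "'x measure"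
    and N K :: nat and L eta sigma_l sigma_g C :: real
    and p :: "nat \<Rightarrow> real"
    and f :: "real^'k^'d \<Rightarrow> real" and gf :: "real^'k^'d \<Rightarrow> real^'k^'d"
    and F :: "nat \<Rightarrow> real^'k^'d \<Rightarrow> real" and gF :: "nat \<Rightarrow> real^'k^'d \<Rightarrow> real^'k^'d"
    and G :: "nat \<Rightarrow> real^'k^'d \<Rightarrow> 'x \<Rightarrow> real^'k^'d"
    and Wt :: "'w \<Rightarrow> real^'k^'d"
    and xi :: "nat \<Rightarrow> nat \<Rightarrow> 'w \<Rightarrow> 'x"
  assumes prob_space_M: "prob_space M"
    and K_pos: "K \<ge> 1"
    and p_sum: "(\<Sum>i\<in>{1..N}. p i) = 1"
    and f_def: "\<And>W. f W = (\<Sum>i\<in>{1..N}. p i * F i W)"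
    and f_grad: "\<And>W. (f has_derivative (\<lambda>h. gf W \<bullet> h)) (at W)"
    and F_grad: "\<And>i W. i \<in> {1..N} \<Longrightarrow> (F i has_derivative (\<lambda>h. gF i W \<bullet> h)) (at W)"
    and A1_f: "\<And>W W'. norm (gf W - gf W') \<le> L * norm (W - W')"
    and A1_F: "\<And>i W W'. i \<in> {1..N} \<Longrightarrow> norm (gF i W - gF i W') \<le> L * norm (W - W')"
    and Wt_meas: "Wt \<in> borel_measurable M"
    and xi_meas: "\<And>i \<tau>. i \<in> {1..N} \<Longrightarrow> \<tau> < K \<Longrightarrow> xi i \<tau> \<in> M \<rightarrow>\<^sub>M X"
    and G_meas: "\<And>i. i \<in> {1..N} \<Longrightarrow> (\<lambda>(W, x). G i W x) \<in> borel_measurable (borel \<Otimes>\<^sub>M X)"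
    and A2_integrable: "\<And>i \<tau>. i \<in> {1..N} \<Longrightarrow> \<tau> < K \<Longrightarrow>
        integrable M (\<lambda>\<omega>. (norm (G i (loc_iter G eta Wt xi i \<tau> \<omega>) (xi i \<tau> \<omega>)))\<^sup>2)"
    and A2_unbiased: "\<And>i \<tau> v. i \<in> {1..N} \<Longrightarrow> \<tau> < K \<Longrightarrow>
        AE \<omega> in M. real_cond_exp M (past M Wt X xi i \<tau>)
            (\<lambda>\<omega>. G i (loc_iter G eta Wt xi i \<tau> \<omega>) (xi i \<tau> \<omega>) \<bullet> v) \<omega>
          = gF i (loc_iter G eta Wt xi i \<tau> \<omega>) \<bullet> v"
    and A2_var: "\<And>i \<tau>. i \<in> {1..N} \<Longrightarrow> \<tau> < K \<Longrightarrow>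
        AE \<omega> in M. real_cond_exp M (past M Wt X xi i \<tau>)
            (\<lambda>\<omega>. (norm (G i (loc_iter G eta Wt xi i \<tau> \<omega>) (xi i \<tau> \<omega>)
                          - gF i (loc_iter G eta Wt xi i \<tau> \<omega>)))\<^sup>2) \<omega>
          \<le> sigma_l\<^sup>2"
    and A3: "\<And>i W. i \<in> {1..N} \<Longrightarrow> (norm (gf W - gF i W))\<^sup>2 \<le> sigma_g\<^sup>2"
    and int_f: "integrable M (\<lambda>\<omega>. f (Wt \<omega>))"
    and int_grad: "integrable M (\<lambda>\<omega>. (norm (gf (Wt \<omega>)))\<^sup>2)"
    and C_pos: "C > 0"
    and step1: "1/2 - 9 * L\<^sup>2 * eta\<^sup>2 * K\<^sup>2 * N * (\<Sum>i\<in>{1..N}. (p i)\<^sup>2) \<ge> C"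
    and step2: "L * eta\<^sup>2 * K / 2 - eta / 2 \<le> 0"
begin

interpretation P: prob_space M by (rule prob_space_M)

abbreviation "W i \<tau> \<equiv> loc_iter G eta Wt xi i \<tau>"
abbreviation "sgrad i \<tau> \<omega> \<equiv> G i (W i \<tau> \<omega>) (xi i \<tau> \<omega>)"
abbreviation "lgrad i \<tau> \<omega> \<equiv> gF i (W i \<tau> \<omega>)"
abbreviation "noise i \<tau> \<omega> \<equiv> sgrad i \<tau> \<omega> - lgrad i \<tau> \<omega>"
abbreviation "sum_p_sq \<equiv> \<Sum>i\<in>{1..N}. (p i)\<^sup>2"
abbreviation "grad_moment \<equiv> \<integral>\<omega>. (norm (gf (Wt \<omega>)))\<^sup>2 \<partial>M"

lemma L_nonneg: "L \<ge> 0"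
proof -
  obtain b :: "real^'k^'d" where b: "b \<in> Basis" using nonempty_Basis by blast
  have "0 \<le> norm (gf b - gf 0)" by simp
  also have "\<dots> \<le> L * norm b" using A1_f[of b 0] by simp
  finally show ?thesis using b by simp
qed

lemma eta_nonneg: "eta \<ge> 0"
proof -
  have "0 \<le> L * eta\<^sup>2 * K / 2" using L_nonneg by simp
  then show ?thesis using step2 by linarith
qed

lemma N_sum_p_sq_ge: "real N * sum_p_sq \<ge> 1"
  using Cauchy_Schwarz_ineq_sum[of "\<lambda>_. 1" p "{1..N}"] p_sum by simp

lemma LetaK_squared_le: "(L * eta * K)\<^sup>2 \<le> 1/18"
proof -
  have "9 * (L * eta * K)\<^sup>2 * (real N * sum_p_sq) \<le> 1/2"
    using step1 C_pos by (simp add: power_mult_distrib algebra_simps)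
  moreover have "9 * (L * eta * K)\<^sup>2 \<le> 9 * (L * eta * K)\<^sup>2 * (real N * sum_p_sq)"
    using N_sum_p_sq_ge by (simp add: mult_le_cancel_left1)
  ultimately show ?thesis by simp
qed

lemma LetaK_le: "L * eta * K \<le> 1/4"
proof (rule ccontr)
  assume "\<not> L * eta * K \<le> 1/4"
  then have "(1/4)\<^sup>2 < (L * eta * K)\<^sup>2" by (intro power_strict_mono) auto
  then show False using LetaK_squared_le by (simp add: power2_eq_square)
qed

lemma gf_measurable[measurable]: "gf \<in> borel_measurable borel"
  by (rule borel_measurable_continuous_onI, rule lipschitz_on_continuous_on[of L])
     (auto intro!: lipschitz_onI simp: dist_norm L_nonneg A1_f)

lemma gF_measurable[measurable]: "i \<in> {1..N} \<Longrightarrow> gF i \<in> borel_measurable borel"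
  by (rule borel_measurable_continuous_onI, rule lipschitz_on_continuous_on[of L])
     (auto intro!: lipschitz_onI simp: dist_norm L_nonneg A1_F)

lemma f_measurable[measurable]: "f \<in> borel_measurable borel"
  by (intro borel_measurable_continuous_onI continuous_at_imp_continuous_on ballI
      has_derivative_continuous[OF f_grad])

lemma G_measurable_comp:
  assumes "i \<in> {1..N}" "A \<in> M' \<rightarrow>\<^sub>M borel" "B \<in> M' \<rightarrow>\<^sub>M X"
  shows "(\<lambda>\<omega>. G i (A \<omega>) (B \<omega>)) \<in> borel_measurable M'"
  using measurable_compose[OF measurable_Pair[OF assms(2,3)] G_meas[OF assms(1)]] by simp

abbreviation "history_space \<tau> \<equiv> (borel :: (real^'k^'d) measure) \<Otimes>\<^sub>M (\<Pi>\<^sub>M s\<in>{..<\<tau>}. X)"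

definition history :: "nat \<Rightarrow> nat \<Rightarrow> 'w \<Rightarrow> (real^'k^'d) \<times> (nat \<Rightarrow> 'x)" where
  "history i \<tau> \<omega> = (Wt \<omega>, \<lambda>s\<in>{..<\<tau>}. xi i s \<omega>)"

text \<open>The local iterate factors through the history; this is how it is seen to be measurable
  with respect to the past.\<close>

definition iterate_of_history :: "nat \<Rightarrow> nat \<Rightarrow> (real^'k^'d) \<times> (nat \<Rightarrow> 'x) \<Rightarrow> real^'k^'d" where
  "iterate_of_history i s = loc_iter G eta fst (\<lambda>_ s z. snd z s) i s"

lemma past_eq_vimage_history: "past M Wt X xi i \<tau> = vimage_algebra (space M) (history i \<tau>) (history_space \<tau>)"
  unfolding past_def history_def by simp

lemma history_measurable: "i \<in> {1..N} \<Longrightarrow> \<tau> \<le> K \<Longrightarrow> history i \<tau> \<in> M \<rightarrow>\<^sub>M history_space \<tau>"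
  unfolding history_def by (intro measurable_Pair Wt_meas measurable_restrict xi_meas) auto

lemma past_subalgebra:
  assumes "i \<in> {1..N}" "\<tau> \<le> K"
  shows "sigma_finite_subalgebra M (past M Wt X xi i \<tau>)"
proof -
  have sub: "subalgebra M (past M Wt X xi i \<tau>)"
    unfolding subalgebra_def past_eq_vimage_history
    using sets_image_in_sets[OF refl history_measurable[OF assms]] by simp
  show ?thesis
    by (rule sigma_finite_subalgebra.intro[OF sub])
       (rule finite_measure.sigma_finite_measure, rule finite_measure_restr_to_subalg[OF sub],
        rule P.finite_measure_axioms)
qed

lemma measurable_past_comp_history:
  assumes "i \<in> {1..N}" "\<tau> \<le> K" "h \<in> history_space \<tau> \<rightarrow>\<^sub>M Y"
  shows "(\<lambda>\<omega>. h (history i \<tau> \<omega>)) \<in> past M Wt X xi i \<tau> \<rightarrow>\<^sub>M Y"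
proof -
  have "history i \<tau> \<in> space M \<rightarrow> space (history_space \<tau>)"
    using measurable_space[OF history_measurable[OF assms(1,2)]] by auto
  from measurable_vimage_algebra1[OF this]
  have "history i \<tau> \<in> past M Wt X xi i \<tau> \<rightarrow>\<^sub>M history_space \<tau>"
    unfolding past_eq_vimage_history .
  from measurable_compose[OF this assms(3)] show ?thesis .
qed

lemma history_sample_measurable: "s < \<tau> \<Longrightarrow> (\<lambda>z. snd z s) \<in> history_space \<tau> \<rightarrow>\<^sub>M X"
  using measurable_compose[OF measurable_snd measurable_component_singleton[of s "{..<\<tau>}" "\<lambda>_. X"]]
  by simp

lemma iterate_of_history_measurable:
  "i \<in> {1..N} \<Longrightarrow> s \<le> \<tau> \<Longrightarrow> iterate_of_history i s \<in> borel_measurable (history_space \<tau>)"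
proof (induction s)
  case 0
  then show ?case by (simp add: iterate_of_history_def)
next
  case (Suc s)
  then have m: "iterate_of_history i s \<in> borel_measurable (history_space \<tau>)" by simp
  have "(\<lambda>z. G i (iterate_of_history i s z) (snd z s)) \<in> borel_measurable (history_space \<tau>)"
    by (rule G_measurable_comp[OF Suc.prems(1) m history_sample_measurable]) (use Suc in simp)
  then show ?case using m unfolding iterate_of_history_def by simp
qed

lemma W_eq_iterate_of_history: "s \<le> \<tau> \<Longrightarrow> W i s \<omega> = iterate_of_history i s (history i \<tau> \<omega>)"
  by (induction s) (auto simp: iterate_of_history_def history_def)

lemma W_measurable_past:
  "i \<in> {1..N} \<Longrightarrow> s \<le> \<tau> \<Longrightarrow> \<tau> \<le> K \<Longrightarrow> W i s \<in> borel_measurable (past M Wt X xi i \<tau>)"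
  using measurable_past_comp_history[OF _ _ iterate_of_history_measurable] W_eq_iterate_of_history
  by (simp cong: measurable_cong)

lemma xi_measurable_past:
  "i \<in> {1..N} \<Longrightarrow> s < \<tau> \<Longrightarrow> \<tau> \<le> K \<Longrightarrow> xi i s \<in> past M Wt X xi i \<tau> \<rightarrow>\<^sub>M X"
  using measurable_past_comp_history[OF _ _ history_sample_measurable, of i \<tau> s]
  by (simp add: history_def)

lemma Wt_measurable_past:
  assumes "i \<in> {1..N}" "\<tau> \<le> K" shows "Wt \<in> borel_measurable (past M Wt X xi i \<tau>)"
proof -
  have "W i 0 = Wt" by (rule ext) simp
  then show ?thesis using W_measurable_past[of i 0 \<tau>] assms by simp
qed

lemma sgrad_measurable_past:
  "i \<in> {1..N} \<Longrightarrow> s < \<tau> \<Longrightarrow> \<tau> \<le> K \<Longrightarrow> sgrad i s \<in> borel_measurable (past M Wt X xi i \<tau>)"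
  by (rule G_measurable_comp[OF _ W_measurable_past xi_measurable_past]) auto

lemma lgrad_measurable_past:
  "i \<in> {1..N} \<Longrightarrow> s \<le> \<tau> \<Longrightarrow> \<tau> \<le> K \<Longrightarrow> lgrad i s \<in> borel_measurable (past M Wt X xi i \<tau>)"
  using measurable_compose[OF W_measurable_past gF_measurable] by simp

lemma W_measurable: "i \<in> {1..N} \<Longrightarrow> \<tau> \<le> K \<Longrightarrow> W i \<tau> \<in> borel_measurable M"
  using measurable_from_subalg[OF sigma_finite_subalgebra.subalg[OF past_subalgebra]
      W_measurable_past] by blast

lemma sgrad_measurable: "i \<in> {1..N} \<Longrightarrow> \<tau> < K \<Longrightarrow> sgrad i \<tau> \<in> borel_measurable M"
  by (rule G_measurable_comp[OF _ W_measurable xi_meas]) auto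

lemma lgrad_measurable: "i \<in> {1..N} \<Longrightarrow> \<tau> \<le> K \<Longrightarrow> lgrad i \<tau> \<in> borel_measurable M"
  using measurable_compose[OF W_measurable gF_measurable] by simp

lemma W_minus_Wt: "W i \<tau> \<omega> - Wt \<omega> = - (eta *\<^sub>R (\<Sum>s<\<tau>. sgrad i s \<omega>))"
  by (induction \<tau>) (auto simp: algebra_simps)

lemma square_integrable_sgrad: "i \<in> {1..N} \<Longrightarrow> \<tau> < K \<Longrightarrow> square_integrable M (sgrad i \<tau>)"
  using sgrad_measurable A2_integrable by (simp add: square_integrable_def)

lemma square_integrable_W_minus_Wt:
  "i \<in> {1..N} \<Longrightarrow> \<tau> \<le> K \<Longrightarrow> square_integrable M (\<lambda>\<omega>. W i \<tau> \<omega> - Wt \<omega>)"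
  unfolding W_minus_Wt
  by (intro square_integrable_uminus square_integrable_scaleR square_integrable_sum
      square_integrable_sgrad) auto

lemma square_integrable_gf_Wt: "square_integrable M (\<lambda>\<omega>. gf (Wt \<omega>))"
  using int_grad Wt_meas by (simp add: square_integrable_def)

lemma square_integrable_gF_Wt:
  assumes i: "i \<in> {1..N}"
  shows "square_integrable M (\<lambda>\<omega>. gF i (Wt \<omega>))"
proof -
  have "square_integrable M (\<lambda>\<omega>. gf (Wt \<omega>) - gF i (Wt \<omega>))"
    by (rule P.square_integrable_bounded[OF _ A3[OF i]]) (use Wt_meas i in measurable)
  from square_integrable_diff[OF square_integrable_gf_Wt this] show ?thesis by simp
qed

lemma square_integrable_lgrad:
  assumes "i \<in> {1..N}" "\<tau> \<le> K"
  shows "square_integrable M (lgrad i \<tau>)"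
proof -
  have "square_integrable M (\<lambda>\<omega>. lgrad i \<tau> \<omega> - gF i (Wt \<omega>))"
  proof (rule square_integrable_norm_le[OF _ square_integrable_scaleR[OF square_integrable_W_minus_Wt[OF assms]]])
    show "(\<lambda>\<omega>. lgrad i \<tau> \<omega> - gF i (Wt \<omega>)) \<in> borel_measurable M"
      using lgrad_measurable[OF assms] Wt_meas assms(1) by measurable
    show "norm (lgrad i \<tau> \<omega> - gF i (Wt \<omega>)) \<le> norm (L *\<^sub>R (W i \<tau> \<omega> - Wt \<omega>))" for \<omega>
      using A1_F[OF assms(1)] L_nonneg by simp
  qed
  from square_integrable_add[OF this square_integrable_gF_Wt[OF assms(1)]] show ?thesis by simp
qed

lemma square_integrable_noise: "i \<in> {1..N} \<Longrightarrow> \<tau> < K \<Longrightarrow> square_integrable M (noise i \<tau>)"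
  by (intro square_integrable_diff square_integrable_sgrad square_integrable_lgrad) auto

lemma integral_inner_sgrad_eq_lgrad:
  assumes i: "i \<in> {1..N}" and \<tau>: "\<tau> < K"
    and Y: "square_integrable M Y" "Y \<in> borel_measurable (past M Wt X xi i \<tau>)"
  shows "(\<integral>\<omega>. Y \<omega> \<bullet> sgrad i \<tau> \<omega> \<partial>M) = (\<integral>\<omega>. Y \<omega> \<bullet> lgrad i \<tau> \<omega> \<partial>M)"
  using sigma_finite_subalgebra.integral_inner_eq_of_cond_exp_inner[OF past_subalgebra
      square_integrable_sgrad square_integrable_lgrad Y A2_unbiased] i \<tau> by simp

lemma integral_inner_noise_eq_0:
  assumes i: "i \<in> {1..N}" and \<tau>: "\<tau> < K"
    and Y: "square_integrable M Y" "Y \<in> borel_measurable (past M Wt X xi i \<tau>)"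
  shows "(\<integral>\<omega>. Y \<omega> \<bullet> noise i \<tau> \<omega> \<partial>M) = 0"
proof -
  have "(\<integral>\<omega>. Y \<omega> \<bullet> noise i \<tau> \<omega> \<partial>M)
      = (\<integral>\<omega>. Y \<omega> \<bullet> sgrad i \<tau> \<omega> \<partial>M) - (\<integral>\<omega>. Y \<omega> \<bullet> lgrad i \<tau> \<omega> \<partial>M)"
    unfolding inner_diff_right
    using integrable_inner_square_integrable[OF Y(1) square_integrable_sgrad[OF i \<tau>]]
      integrable_inner_square_integrable[OF Y(1) square_integrable_lgrad[OF i]] \<tau> by simp
  then show ?thesis using integral_inner_sgrad_eq_lgrad[OF assms] by simp
qed

lemma integral_noise_squared_le:
  assumes "i \<in> {1..N}" "\<tau> < K"
  shows "(\<integral>\<omega>. (norm (noise i \<tau> \<omega>))\<^sup>2 \<partial>M) \<le> sigma_l\<^sup>2"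
  using P.integral_le_of_cond_exp_le[OF past_subalgebra
      square_integrable_norm_squared[OF square_integrable_noise] A2_var] assms by simp

text \<open>The noises form a martingale difference sequence, so their second moments add up.\<close>

lemma integral_norm_sum_noise_squared_le:
  assumes i: "i \<in> {1..N}" and \<tau>: "\<tau> \<le> K"
  shows "(\<integral>\<omega>. (norm (\<Sum>s<\<tau>. noise i s \<omega>))\<^sup>2 \<partial>M) \<le> \<tau> * sigma_l\<^sup>2"
proof -
  have "(\<integral>\<omega>. (norm (\<Sum>s<\<tau>. noise i s \<omega>))\<^sup>2 \<partial>M) = (\<Sum>s<\<tau>. \<integral>\<omega>. (norm (noise i s \<omega>))\<^sup>2 \<partial>M)"
  proof (rule integral_norm_sum_squared_orthogonal)
    fix s assume s: "s < \<tau>"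
    show "square_integrable M (noise i s)" using square_integrable_noise i s \<tau> by simp
    show "(\<integral>\<omega>. (\<Sum>r<s. noise i r \<omega>) \<bullet> noise i s \<omega> \<partial>M) = 0"
    proof (rule integral_inner_noise_eq_0[OF i])
      show "square_integrable M (\<lambda>\<omega>. \<Sum>r<s. noise i r \<omega>)"
        using s \<tau> by (intro square_integrable_sum square_integrable_noise i) auto
      show "(\<lambda>\<omega>. \<Sum>r<s. noise i r \<omega>) \<in> borel_measurable (past M Wt X xi i s)"
        using s \<tau> sgrad_measurable_past[OF i] lgrad_measurable_past[OF i]
        by (intro borel_measurable_sum borel_measurable_diff) auto
    qed (use s \<tau> in simp)
  qed
  also have "\<dots> \<le> (\<Sum>s<\<tau>. sigma_l\<^sup>2)"
    by (rule sum_mono) (use integral_noise_squared_le i \<tau> in auto)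
  finally show ?thesis by simp
qed

lemma integral_lgrad_squared_le:
  assumes i: "i \<in> {1..N}" and s: "s \<le> K"
  shows "(\<integral>\<omega>. (norm (lgrad i s \<omega>))\<^sup>2 \<partial>M)
     \<le> 3 * L\<^sup>2 * (\<integral>\<omega>. (norm (W i s \<omega> - Wt \<omega>))\<^sup>2 \<partial>M) + 3 * sigma_g\<^sup>2 + 3 * grad_moment"
proof -
  have bound: "(norm (lgrad i s \<omega>))\<^sup>2
      \<le> 3 * L\<^sup>2 * (norm (W i s \<omega> - Wt \<omega>))\<^sup>2 + 3 * sigma_g\<^sup>2 + 3 * (norm (gf (Wt \<omega>)))\<^sup>2" for \<omega>
  proof -
    have "(norm (lgrad i s \<omega>))\<^sup>2 \<le> 3 * (norm (lgrad i s \<omega> - gF i (Wt \<omega>)))\<^sup>2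
        + 3 * (norm (gF i (Wt \<omega>) - gf (Wt \<omega>)))\<^sup>2 + 3 * (norm (gf (Wt \<omega>)))\<^sup>2"
      using norm_add3_squared_le[of "lgrad i s \<omega> - gF i (Wt \<omega>)" "gF i (Wt \<omega>) - gf (Wt \<omega>)" "gf (Wt \<omega>)"]
      by simp
    moreover have "(norm (lgrad i s \<omega> - gF i (Wt \<omega>)))\<^sup>2 \<le> L\<^sup>2 * (norm (W i s \<omega> - Wt \<omega>))\<^sup>2"
      using power_mono[OF A1_F[OF i, of "W i s \<omega>" "Wt \<omega>"] norm_ge_zero, of 2]
      by (simp add: power_mult_distrib)
    moreover have "(norm (gF i (Wt \<omega>) - gf (Wt \<omega>)))\<^sup>2 \<le> sigma_g\<^sup>2"
      using A3[OF i, of "Wt \<omega>"] by (simp add: norm_minus_commute)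
    ultimately show ?thesis by linarith
  qed
  have ints: "integrable M (\<lambda>\<omega>. (norm (W i s \<omega> - Wt \<omega>))\<^sup>2)" "integrable M (\<lambda>\<omega>. (norm (gf (Wt \<omega>)))\<^sup>2)"
    using square_integrable_W_minus_Wt[OF i s] int_grad by (simp_all add: square_integrable_def)
  have "(\<integral>\<omega>. (norm (lgrad i s \<omega>))\<^sup>2 \<partial>M)
     \<le> (\<integral>\<omega>. 3 * L\<^sup>2 * (norm (W i s \<omega> - Wt \<omega>))\<^sup>2 + 3 * sigma_g\<^sup>2 + 3 * (norm (gf (Wt \<omega>)))\<^sup>2 \<partial>M)"
    by (rule integral_mono[OF square_integrable_norm_squared[OF square_integrable_lgrad[OF i s]] _ bound])
       (use ints in auto)
  also have "\<dots> = 3 * L\<^sup>2 * (\<integral>\<omega>. (norm (W i s \<omega> - Wt \<omega>))\<^sup>2 \<partial>M) + 3 * sigma_g\<^sup>2 + 3 * grad_moment"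
    using ints by (simp add: P.prob_space)
  finally show ?thesis .
qed

lemma integral_W_minus_Wt_squared_le:
  assumes i: "i \<in> {1..N}" and \<tau>: "\<tau> \<le> K"
  shows "(\<integral>\<omega>. (norm (W i \<tau> \<omega> - Wt \<omega>))\<^sup>2 \<partial>M)
     \<le> 2 * eta\<^sup>2 * \<tau> * sigma_l\<^sup>2 + 2 * eta\<^sup>2 * \<tau> * (\<Sum>s<\<tau>. \<integral>\<omega>. (norm (lgrad i s \<omega>))\<^sup>2 \<partial>M)"
proof -
  have bound: "(norm (W i \<tau> \<omega> - Wt \<omega>))\<^sup>2 \<le> 2 * eta\<^sup>2 * (norm (\<Sum>s<\<tau>. noise i s \<omega>))\<^sup>2
      + 2 * eta\<^sup>2 * \<tau> * (\<Sum>s<\<tau>. (norm (lgrad i s \<omega>))\<^sup>2)" for \<omega>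
  proof -
    have "W i \<tau> \<omega> - Wt \<omega> = - (eta *\<^sub>R ((\<Sum>s<\<tau>. noise i s \<omega>) + (\<Sum>s<\<tau>. lgrad i s \<omega>)))"
      unfolding W_minus_Wt by (simp add: sum.distrib[symmetric])
    then have "(norm (W i \<tau> \<omega> - Wt \<omega>))\<^sup>2 = eta\<^sup>2 * (norm ((\<Sum>s<\<tau>. noise i s \<omega>) + (\<Sum>s<\<tau>. lgrad i s \<omega>)))\<^sup>2"
      by (simp add: power_mult_distrib)
    also have "\<dots> \<le> eta\<^sup>2 * (2 * (norm (\<Sum>s<\<tau>. noise i s \<omega>))\<^sup>2 + 2 * (norm (\<Sum>s<\<tau>. lgrad i s \<omega>))\<^sup>2)"
      by (rule mult_left_mono[OF norm_add_squared_le]) simp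
    also have "\<dots> \<le> eta\<^sup>2 * (2 * (norm (\<Sum>s<\<tau>. noise i s \<omega>))\<^sup>2 + 2 * (\<tau> * (\<Sum>s<\<tau>. (norm (lgrad i s \<omega>))\<^sup>2)))"
      using norm_sum_squared_le_card[of "\<lambda>s. lgrad i s \<omega>" "{..<\<tau>}"]
      by (intro mult_left_mono add_left_mono) auto
    finally show ?thesis by (simp add: algebra_simps)
  qed
  have noise_sum: "square_integrable M (\<lambda>\<omega>. \<Sum>s<\<tau>. noise i s \<omega>)"
    using \<tau> by (intro square_integrable_sum square_integrable_noise i) auto
  have lgrad_sq: "integrable M (\<lambda>\<omega>. (norm (lgrad i s \<omega>))\<^sup>2)" if "s \<in> {..<\<tau>}" for s
    using square_integrable_lgrad[OF i] that \<tau> by (simp add: square_integrable_def)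
  have lgrad_sum: "integrable M (\<lambda>\<omega>. \<Sum>s<\<tau>. (norm (lgrad i s \<omega>))\<^sup>2)"
    using lgrad_sq by (intro Bochner_Integration.integrable_sum) auto
  have "(\<integral>\<omega>. (norm (W i \<tau> \<omega> - Wt \<omega>))\<^sup>2 \<partial>M)
     \<le> (\<integral>\<omega>. 2 * eta\<^sup>2 * (norm (\<Sum>s<\<tau>. noise i s \<omega>))\<^sup>2
          + 2 * eta\<^sup>2 * \<tau> * (\<Sum>s<\<tau>. (norm (lgrad i s \<omega>))\<^sup>2) \<partial>M)"
    by (rule integral_mono[OF square_integrable_norm_squared[OF square_integrable_W_minus_Wt[OF i \<tau>]] _ bound])
       (use square_integrable_norm_squared[OF noise_sum] lgrad_sum in auto)
  also have "\<dots> = 2 * eta\<^sup>2 * (\<integral>\<omega>. (norm (\<Sum>s<\<tau>. noise i s \<omega>))\<^sup>2 \<partial>M)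
       + 2 * eta\<^sup>2 * \<tau> * (\<Sum>s<\<tau>. \<integral>\<omega>. (norm (lgrad i s \<omega>))\<^sup>2 \<partial>M)"
    using square_integrable_norm_squared[OF noise_sum] lgrad_sum
      Bochner_Integration.integral_sum[of "{..<\<tau>}" M, OF lgrad_sq]
    by simp
  also have "\<dots> \<le> 2 * eta\<^sup>2 * (\<tau> * sigma_l\<^sup>2)
       + 2 * eta\<^sup>2 * \<tau> * (\<Sum>s<\<tau>. \<integral>\<omega>. (norm (lgrad i s \<omega>))\<^sup>2 \<partial>M)"
    using integral_norm_sum_noise_squared_le[OF i \<tau>] by (simp add: mult_left_mono)
  finally show ?thesis by (simp add: algebra_simps)
qed

lemma integral_W_minus_Wt_squared_le_uniform:
  assumes i: "i \<in> {1..N}" and \<tau>: "\<tau> < K"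
  shows "(\<integral>\<omega>. (norm (W i \<tau> \<omega> - Wt \<omega>))\<^sup>2 \<partial>M)
     \<le> 2 * eta\<^sup>2 * K * sigma_l\<^sup>2 + 2 * eta\<^sup>2 * K * (\<Sum>s<K. \<integral>\<omega>. (norm (lgrad i s \<omega>))\<^sup>2 \<partial>M)"
proof -
  define e where "e s = (\<integral>\<omega>. (norm (lgrad i s \<omega>))\<^sup>2 \<partial>M)" for s
  have "(\<Sum>s<\<tau>. e s) \<le> (\<Sum>s<K. e s)"
    unfolding e_def by (rule sum_mono2) (use \<tau> in auto)
  moreover have "(\<Sum>s<\<tau>. e s) \<ge> 0" by (simp add: e_def sum_nonneg)
  moreover have "real \<tau> \<le> K" using \<tau> by simp
  ultimately have "\<tau> * sigma_l\<^sup>2 \<le> K * sigma_l\<^sup>2" "\<tau> * (\<Sum>s<\<tau>. e s) \<le> K * (\<Sum>s<K. e s)"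
    by (auto intro: mult_right_mono mult_mono)
  then have "2 * eta\<^sup>2 * (\<tau> * sigma_l\<^sup>2) + 2 * eta\<^sup>2 * (\<tau> * (\<Sum>s<\<tau>. e s))
      \<le> 2 * eta\<^sup>2 * (K * sigma_l\<^sup>2) + 2 * eta\<^sup>2 * (K * (\<Sum>s<K. e s))"
    by (intro add_mono mult_left_mono) auto
  moreover have "(\<integral>\<omega>. (norm (W i \<tau> \<omega> - Wt \<omega>))\<^sup>2 \<partial>M)
      \<le> 2 * eta\<^sup>2 * (\<tau> * sigma_l\<^sup>2) + 2 * eta\<^sup>2 * (\<tau> * (\<Sum>s<\<tau>. e s))"
    unfolding e_def using integral_W_minus_Wt_squared_le[OF i] \<tau> by (simp add: mult.assoc)
  ultimately show ?thesis unfolding e_def by (simp add: mult.assoc)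
qed

text \<open>Together with the bound on the local gradients this gives a recursive inequality for the total drift,
  which closes because \<open>6 (L \<eta> K)\<^sup>2 \<le> 1/3\<close>.\<close>

lemma local_drift_le:
  assumes i: "i \<in> {1..N}"
  shows "(\<Sum>\<tau><K. \<integral>\<omega>. (norm (W i \<tau> \<omega> - Wt \<omega>))\<^sup>2 \<partial>M)
     \<le> 3 * eta\<^sup>2 * K\<^sup>2 * (sigma_l\<^sup>2 + 6 * K * sigma_g\<^sup>2 + 6 * K * grad_moment)"
proof -
  define d where "d \<tau> = (\<integral>\<omega>. (norm (W i \<tau> \<omega> - Wt \<omega>))\<^sup>2 \<partial>M)" for \<tau>
  define e where "e s = (\<integral>\<omega>. (norm (lgrad i s \<omega>))\<^sup>2 \<partial>M)" for s
  define S where "S = (\<Sum>\<tau><K. d \<tau>)"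
  define E where "E = (\<Sum>s<K. e s)"
  have e_nonneg: "e s \<ge> 0" for s unfolding e_def by simp
  have S_nonneg: "S \<ge> 0" unfolding S_def d_def by (simp add: sum_nonneg)
  have E_le: "E \<le> 3 * L\<^sup>2 * S + K * (3 * sigma_g\<^sup>2 + 3 * grad_moment)"
  proof -
    have "E \<le> (\<Sum>s<K. 3 * L\<^sup>2 * d s + 3 * sigma_g\<^sup>2 + 3 * grad_moment)"
      unfolding E_def e_def d_def by (rule sum_mono) (use integral_lgrad_squared_le[OF i] in auto)
    also have "\<dots> = 3 * L\<^sup>2 * S + K * (3 * sigma_g\<^sup>2 + 3 * grad_moment)"
      by (simp add: S_def sum.distrib sum_distrib_left[symmetric] distrib_left)
    finally show ?thesis .
  qed
  have d_le: "d \<tau> \<le> 2 * eta\<^sup>2 * K * sigma_l\<^sup>2 + 2 * eta\<^sup>2 * K * E" if "\<tau> < K" for \<tau>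
    unfolding d_def E_def e_def by (rule integral_W_minus_Wt_squared_le_uniform[OF i that])
  have "S \<le> (\<Sum>\<tau><K. 2 * eta\<^sup>2 * K * sigma_l\<^sup>2 + 2 * eta\<^sup>2 * K * E)"
    unfolding S_def by (rule sum_mono) (use d_le in auto)
  also have "\<dots> = K * (2 * eta\<^sup>2 * K * sigma_l\<^sup>2 + 2 * eta\<^sup>2 * K * E)" by simp
  also have "\<dots> \<le> K * (2 * eta\<^sup>2 * K * sigma_l\<^sup>2
      + 2 * eta\<^sup>2 * K * (3 * L\<^sup>2 * S + K * (3 * sigma_g\<^sup>2 + 3 * grad_moment)))"
    using E_le by (intro mult_left_mono add_left_mono) auto
  also have "\<dots> = 2 * (eta\<^sup>2 * K\<^sup>2) * sigma_l\<^sup>2 + 6 * ((L * eta * K)\<^sup>2 * S)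
      + 6 * (eta\<^sup>2 * K\<^sup>2) * K * (sigma_g\<^sup>2 + grad_moment)"
    by (simp add: algebra_simps power2_eq_square)
  finally have "S \<le> 2 * (eta\<^sup>2 * K\<^sup>2) * sigma_l\<^sup>2 + 6 * ((L * eta * K)\<^sup>2 * S)
      + 6 * (eta\<^sup>2 * K\<^sup>2) * K * (sigma_g\<^sup>2 + grad_moment)" .
  moreover have "(L * eta * K)\<^sup>2 * S \<le> 1/18 * S" by (rule mult_right_mono[OF LetaK_squared_le S_nonneg])
  moreover have "0 \<le> (eta\<^sup>2 * K\<^sup>2) * K * (sigma_g\<^sup>2 + grad_moment)" by simp
  ultimately have "S \<le> 3 * (eta\<^sup>2 * K\<^sup>2) * sigma_l\<^sup>2 + 18 * (eta\<^sup>2 * K\<^sup>2) * K * (sigma_g\<^sup>2 + grad_moment)"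
    by linarith
  then show ?thesis unfolding S_def d_def by (simp add: algebra_simps)
qed

lemma gf_eq_sum_gF: "gf w = (\<Sum>i\<in>{1..N}. p i *\<^sub>R gF i w)"
proof -
  have "f = (\<lambda>W. \<Sum>i\<in>{1..N}. p i * F i W)" using f_def by (rule ext)
  then have "(f has_derivative (\<lambda>h. \<Sum>i\<in>{1..N}. p i * (gF i w \<bullet> h))) (at w)"
    by (simp only:) (intro has_derivative_sum has_derivative_mult_right F_grad; simp)
  from has_derivative_unique[OF f_grad this]
  have "gf w \<bullet> h = (\<Sum>i\<in>{1..N}. p i *\<^sub>R gF i w) \<bullet> h" for h
    by (metis (no_types, lifting) inner_commute inner_scaleR_right inner_sum_right sum.cong)
  then have "(gf w - (\<Sum>i\<in>{1..N}. p i *\<^sub>R gF i w)) \<bullet> (gf w - (\<Sum>i\<in>{1..N}. p i *\<^sub>R gF i w)) = 0"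
    by (simp add: inner_diff_left)
  then show ?thesis by simp
qed

definition direction :: "'w \<Rightarrow> real^'k^'d" where
  "direction \<omega> = (\<Sum>i\<in>{1..N}. p i *\<^sub>R (\<Sum>\<tau><K. sgrad i \<tau> \<omega>))"

definition mean_lgrad :: "nat \<Rightarrow> 'w \<Rightarrow> real^'k^'d" where
  "mean_lgrad \<tau> \<omega> = (\<Sum>i\<in>{1..N}. p i *\<^sub>R lgrad i \<tau> \<omega>)"

definition direction_noise :: "'w \<Rightarrow> real^'k^'d" where
  "direction_noise \<omega> = (\<Sum>i\<in>{1..N}. p i *\<^sub>R (\<Sum>\<tau><K. noise i \<tau> \<omega>))"

definition direction_mean :: "'w \<Rightarrow> real^'k^'d" where
  "direction_mean \<omega> = (\<Sum>\<tau><K. mean_lgrad \<tau> \<omega>)"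

lemma V_next_eq: "V_next G eta Wt xi p N K \<omega> = Wt \<omega> - eta *\<^sub>R direction \<omega>"
proof -
  have "V_next G eta Wt xi p N K \<omega>
      = (\<Sum>i\<in>{1..N}. p i *\<^sub>R Wt \<omega>) - (\<Sum>i\<in>{1..N}. p i *\<^sub>R (eta *\<^sub>R (\<Sum>\<tau><K. sgrad i \<tau> \<omega>)))"
    unfolding V_next_def by (simp add: scaleR_diff_right sum_subtractf)
  also have "(\<Sum>i\<in>{1..N}. p i *\<^sub>R Wt \<omega>) = Wt \<omega>"
    using p_sum by (simp add: scaleR_sum_left[symmetric])
  also have "(\<Sum>i\<in>{1..N}. p i *\<^sub>R (eta *\<^sub>R (\<Sum>\<tau><K. sgrad i \<tau> \<omega>))) = eta *\<^sub>R direction \<omega>"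
    unfolding direction_def by (simp add: scaleR_sum_right mult.commute)
  finally show ?thesis .
qed

lemma direction_eq: "direction \<omega> = direction_noise \<omega> + direction_mean \<omega>"
proof -
  have "direction \<omega> = (\<Sum>i\<in>{1..N}. p i *\<^sub>R (\<Sum>\<tau><K. noise i \<tau> \<omega>) + p i *\<^sub>R (\<Sum>\<tau><K. lgrad i \<tau> \<omega>))"
    unfolding direction_def
    by (intro sum.cong refl) (simp add: sum.distrib[symmetric] scaleR_add_right[symmetric])
  also have "\<dots> = direction_noise \<omega> + (\<Sum>i\<in>{1..N}. \<Sum>\<tau><K. p i *\<^sub>R lgrad i \<tau> \<omega>)"
    unfolding direction_noise_def by (simp add: sum.distrib scaleR_sum_right)
  also have "(\<Sum>i\<in>{1..N}. \<Sum>\<tau><K. p i *\<^sub>R lgrad i \<tau> \<omega>) = direction_mean \<omega>"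
    unfolding direction_mean_def mean_lgrad_def by (rule sum.swap)
  finally show ?thesis .
qed

lemma square_integrable_mean_lgrad: "\<tau> \<le> K \<Longrightarrow> square_integrable M (mean_lgrad \<tau>)"
  unfolding mean_lgrad_def
  by (intro square_integrable_sum square_integrable_scaleR square_integrable_lgrad) auto

lemma square_integrable_direction_mean: "square_integrable M direction_mean"
  unfolding direction_mean_def by (intro square_integrable_sum square_integrable_mean_lgrad) auto

lemma square_integrable_direction_noise: "square_integrable M direction_noise"
  unfolding direction_noise_def
  by (intro square_integrable_sum square_integrable_scaleR square_integrable_noise) auto

lemma square_integrable_direction: "square_integrable M direction"
  using square_integrable_add[OF square_integrable_direction_noise square_integrable_direction_mean]
  by (simp add: direction_eq[abs_def])

lemma f_V_next_approx:
  "\<bar>f (V_next G eta Wt xi p N K \<omega>) - f (Wt \<omega>) + eta * (gf (Wt \<omega>) \<bullet> direction \<omega>)\<bar>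
     \<le> L * eta\<^sup>2 / 2 * (norm (direction \<omega>))\<^sup>2"
  using lipschitz_gradient_quadratic_bound[OF f_grad A1_f, of "Wt \<omega> - eta *\<^sub>R direction \<omega>" "Wt \<omega>"]
  by (simp add: V_next_eq power_mult_distrib)

lemma integrable_f_V_next: "integrable M (\<lambda>\<omega>. f (V_next G eta Wt xi p N K \<omega>))"
proof -
  have "integrable M (\<lambda>\<omega>. f (V_next G eta Wt xi p N K \<omega>) - f (Wt \<omega>) + eta * (gf (Wt \<omega>) \<bullet> direction \<omega>))"
  proof (rule Bochner_Integration.integrable_bound)
    show "integrable M (\<lambda>\<omega>. L * eta\<^sup>2 / 2 * (norm (direction \<omega>))\<^sup>2)"
      using square_integrable_direction by (simp add: square_integrable_def)
    show "(\<lambda>\<omega>. f (V_next G eta Wt xi p N K \<omega>) - f (Wt \<omega>) + eta * (gf (Wt \<omega>) \<bullet> direction \<omega>))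
        \<in> borel_measurable M"
      using square_integrable_measurable[OF square_integrable_direction] Wt_meas
      unfolding V_next_eq by measurable
    show "AE \<omega> in M. norm (f (V_next G eta Wt xi p N K \<omega>) - f (Wt \<omega>) + eta * (gf (Wt \<omega>) \<bullet> direction \<omega>))
        \<le> norm (L * eta\<^sup>2 / 2 * (norm (direction \<omega>))\<^sup>2)"
      using f_V_next_approx by (intro AE_I2) (simp add: order_trans[OF _ abs_ge_self])
  qed
  moreover have "integrable M (\<lambda>\<omega>. f (Wt \<omega>) - eta * (gf (Wt \<omega>) \<bullet> direction \<omega>))"
    using int_f integrable_inner_square_integrable[OF square_integrable_gf_Wt square_integrable_direction]
    by simp
  ultimately have "integrable M (\<lambda>\<omega>. (f (V_next G eta Wt xi p N K \<omega>) - f (Wt \<omega>)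
      + eta * (gf (Wt \<omega>) \<bullet> direction \<omega>)) + (f (Wt \<omega>) - eta * (gf (Wt \<omega>) \<bullet> direction \<omega>)))"
    by (rule Bochner_Integration.integrable_add)
  then show ?thesis by simp
qed

lemma integral_f_V_next_le:
  "(\<integral>\<omega>. f (V_next G eta Wt xi p N K \<omega>) \<partial>M)
     \<le> (\<integral>\<omega>. f (Wt \<omega>) \<partial>M) - eta * (\<integral>\<omega>. gf (Wt \<omega>) \<bullet> direction \<omega> \<partial>M)
       + L * eta\<^sup>2 / 2 * (\<integral>\<omega>. (norm (direction \<omega>))\<^sup>2 \<partial>M)"
proof -
  note ints = int_f integrable_inner_square_integrable[OF square_integrable_gf_Wt square_integrable_direction]
    square_integrable_norm_squared[OF square_integrable_direction]
  have "(\<integral>\<omega>. f (V_next G eta Wt xi p N K \<omega>) \<partial>M)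
     \<le> (\<integral>\<omega>. f (Wt \<omega>) - eta * (gf (Wt \<omega>) \<bullet> direction \<omega>) + L * eta\<^sup>2 / 2 * (norm (direction \<omega>))\<^sup>2 \<partial>M)"
  proof (rule integral_mono[OF integrable_f_V_next])
    show "f (V_next G eta Wt xi p N K \<omega>)
        \<le> f (Wt \<omega>) - eta * (gf (Wt \<omega>) \<bullet> direction \<omega>) + L * eta\<^sup>2 / 2 * (norm (direction \<omega>))\<^sup>2" for \<omega>
      using f_V_next_approx[of \<omega>] unfolding abs_le_iff by linarith
  qed (use ints in auto)
  also have "\<dots> = (\<integral>\<omega>. f (Wt \<omega>) \<partial>M) - eta * (\<integral>\<omega>. gf (Wt \<omega>) \<bullet> direction \<omega> \<partial>M)
       + L * eta\<^sup>2 / 2 * (\<integral>\<omega>. (norm (direction \<omega>))\<^sup>2 \<partial>M)"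
    using ints by simp
  finally show ?thesis .
qed

text \<open>Conditional unbiasedness: each stochastic gradient may be replaced by the true local
  gradient, since \<open>\<nabla>f(W\<^sub>t)\<close> is known in the past of every step.\<close>

lemma integral_inner_direction:
  "(\<integral>\<omega>. gf (Wt \<omega>) \<bullet> direction \<omega> \<partial>M) = (\<Sum>\<tau><K. \<integral>\<omega>. gf (Wt \<omega>) \<bullet> mean_lgrad \<tau> \<omega> \<partial>M)"
proof -
  have past: "(\<lambda>\<omega>. gf (Wt \<omega>)) \<in> borel_measurable (past M Wt X xi i \<tau>)"
    if "i \<in> {1..N}" "\<tau> < K" for i \<tau>
    using measurable_compose[OF Wt_measurable_past gf_measurable] that by simp
  have int: "integrable M (\<lambda>\<omega>. gf (Wt \<omega>) \<bullet> sgrad i \<tau> \<omega>)" "integrable M (\<lambda>\<omega>. gf (Wt \<omega>) \<bullet> lgrad i \<tau> \<omega>)"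
    if "i \<in> {1..N}" "\<tau> \<in> {..<K}" for i \<tau>
    using integrable_inner_square_integrable[OF square_integrable_gf_Wt square_integrable_sgrad]
      integrable_inner_square_integrable[OF square_integrable_gf_Wt square_integrable_lgrad] that
    by auto
  have "(\<integral>\<omega>. gf (Wt \<omega>) \<bullet> direction \<omega> \<partial>M)
      = (\<Sum>i\<in>{1..N}. \<integral>\<omega>. p i * (\<Sum>\<tau><K. gf (Wt \<omega>) \<bullet> sgrad i \<tau> \<omega>) \<partial>M)"
    unfolding direction_def inner_sum_right inner_scaleR_right
    by (rule Bochner_Integration.integral_sum)
       (use int in \<open>auto intro!: integrable_mult_right Bochner_Integration.integrable_sum\<close>)
  also have "\<dots> = (\<Sum>i\<in>{1..N}. p i * (\<Sum>\<tau><K. \<integral>\<omega>. gf (Wt \<omega>) \<bullet> sgrad i \<tau> \<omega> \<partial>M))"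
    by (intro sum.cong refl) (use int in \<open>simp add: Bochner_Integration.integral_sum\<close>)
  also have "\<dots> = (\<Sum>i\<in>{1..N}. p i * (\<Sum>\<tau><K. \<integral>\<omega>. gf (Wt \<omega>) \<bullet> lgrad i \<tau> \<omega> \<partial>M))"
    by (intro sum.cong refl arg_cong2[where f="(*)"] integral_inner_sgrad_eq_lgrad
        square_integrable_gf_Wt past) auto
  also have "\<dots> = (\<Sum>\<tau><K. \<integral>\<omega>. gf (Wt \<omega>) \<bullet> mean_lgrad \<tau> \<omega> \<partial>M)"
    unfolding mean_lgrad_def inner_sum_right inner_scaleR_right sum_distrib_left
    using int by (subst sum.swap) (simp add: Bochner_Integration.integral_sum)
  finally show ?thesis .
qed

lemma integral_inner_direction_eq:
  "- eta * (\<integral>\<omega>. gf (Wt \<omega>) \<bullet> direction \<omega> \<partial>M)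
     = eta / 2 * ((\<Sum>\<tau><K. \<integral>\<omega>. (norm (gf (Wt \<omega>) - mean_lgrad \<tau> \<omega>))\<^sup>2 \<partial>M)
        - K * grad_moment - (\<Sum>\<tau><K. \<integral>\<omega>. (norm (mean_lgrad \<tau> \<omega>))\<^sup>2 \<partial>M))"
proof -
  have "(\<Sum>\<tau><K. \<integral>\<omega>. gf (Wt \<omega>) \<bullet> mean_lgrad \<tau> \<omega> \<partial>M) = (\<Sum>\<tau><K. (grad_moment
      + (\<integral>\<omega>. (norm (mean_lgrad \<tau> \<omega>))\<^sup>2 \<partial>M) - (\<integral>\<omega>. (norm (gf (Wt \<omega>) - mean_lgrad \<tau> \<omega>))\<^sup>2 \<partial>M)) / 2)"
    by (intro sum.cong refl integral_inner_polarize square_integrable_gf_Wt square_integrable_mean_lgrad) simp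
  then have sum_eq: "(\<Sum>\<tau><K. \<integral>\<omega>. gf (Wt \<omega>) \<bullet> mean_lgrad \<tau> \<omega> \<partial>M) = (K * grad_moment
      + (\<Sum>\<tau><K. \<integral>\<omega>. (norm (mean_lgrad \<tau> \<omega>))\<^sup>2 \<partial>M)
      - (\<Sum>\<tau><K. \<integral>\<omega>. (norm (gf (Wt \<omega>) - mean_lgrad \<tau> \<omega>))\<^sup>2 \<partial>M)) / 2"
    by (simp add: sum_divide_distrib[symmetric] sum.distrib sum_subtractf)
  show ?thesis unfolding integral_inner_direction sum_eq by (simp add: field_simps)
qed

lemma integral_gf_minus_mean_lgrad_squared_le:
  "(\<Sum>\<tau><K. \<integral>\<omega>. (norm (gf (Wt \<omega>) - mean_lgrad \<tau> \<omega>))\<^sup>2 \<partial>M)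
     \<le> sum_p_sq * L\<^sup>2 * (\<Sum>i\<in>{1..N}. \<Sum>\<tau><K. \<integral>\<omega>. (norm (W i \<tau> \<omega> - Wt \<omega>))\<^sup>2 \<partial>M)"
proof -
  have bound: "(norm (gf (Wt \<omega>) - mean_lgrad \<tau> \<omega>))\<^sup>2
      \<le> sum_p_sq * L\<^sup>2 * (\<Sum>i\<in>{1..N}. (norm (W i \<tau> \<omega> - Wt \<omega>))\<^sup>2)" for \<tau> \<omega>
  proof -
    have "gf (Wt \<omega>) - mean_lgrad \<tau> \<omega> = (\<Sum>i\<in>{1..N}. p i *\<^sub>R (gF i (Wt \<omega>) - lgrad i \<tau> \<omega>))"
      unfolding mean_lgrad_def gf_eq_sum_gF[of "Wt \<omega>"] by (simp add: scaleR_diff_right sum_subtractf)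
    then have "(norm (gf (Wt \<omega>) - mean_lgrad \<tau> \<omega>))\<^sup>2
        \<le> sum_p_sq * (\<Sum>i\<in>{1..N}. (norm (gF i (Wt \<omega>) - lgrad i \<tau> \<omega>))\<^sup>2)"
      by (simp add: norm_sum_scaleR_squared_le)
    also have "\<dots> \<le> sum_p_sq * (\<Sum>i\<in>{1..N}. L\<^sup>2 * (norm (W i \<tau> \<omega> - Wt \<omega>))\<^sup>2)"
    proof (intro mult_left_mono sum_mono)
      fix i assume i: "i \<in> {1..N}"
      have "norm (gF i (Wt \<omega>) - lgrad i \<tau> \<omega>) \<le> L * norm (W i \<tau> \<omega> - Wt \<omega>)"
        using A1_F[OF i, of "W i \<tau> \<omega>" "Wt \<omega>"] by (simp add: norm_minus_commute)
      from power_mono[OF this norm_ge_zero, of 2]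
      show "(norm (gF i (Wt \<omega>) - lgrad i \<tau> \<omega>))\<^sup>2 \<le> L\<^sup>2 * (norm (W i \<tau> \<omega> - Wt \<omega>))\<^sup>2"
        by (simp add: power_mult_distrib)
    qed (simp add: sum_nonneg)
    finally show ?thesis by (simp add: sum_distrib_left mult.assoc)
  qed
  have int: "integrable M (\<lambda>\<omega>. (norm (W i \<tau> \<omega> - Wt \<omega>))\<^sup>2)" if "i \<in> {1..N}" "\<tau> < K" for i \<tau>
    using square_integrable_norm_squared[OF square_integrable_W_minus_Wt] that by simp
  have "(\<integral>\<omega>. (norm (gf (Wt \<omega>) - mean_lgrad \<tau> \<omega>))\<^sup>2 \<partial>M)
      \<le> sum_p_sq * L\<^sup>2 * (\<Sum>i\<in>{1..N}. \<integral>\<omega>. (norm (W i \<tau> \<omega> - Wt \<omega>))\<^sup>2 \<partial>M)" if \<tau>: "\<tau> < K" for \<tau>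
  proof -
    have "(\<integral>\<omega>. (norm (gf (Wt \<omega>) - mean_lgrad \<tau> \<omega>))\<^sup>2 \<partial>M)
        \<le> (\<integral>\<omega>. sum_p_sq * L\<^sup>2 * (\<Sum>i\<in>{1..N}. (norm (W i \<tau> \<omega> - Wt \<omega>))\<^sup>2) \<partial>M)"
      by (rule integral_mono[OF square_integrable_norm_squared[OF square_integrable_diff[OF
            square_integrable_gf_Wt square_integrable_mean_lgrad]] _ bound])
         (use \<tau> int in \<open>auto intro!: integrable_mult_right Bochner_Integration.integrable_sum\<close>)
    also have "\<dots> = sum_p_sq * L\<^sup>2 * (\<Sum>i\<in>{1..N}. \<integral>\<omega>. (norm (W i \<tau> \<omega> - Wt \<omega>))\<^sup>2 \<partial>M)"
      using int \<tau> by (simp add: Bochner_Integration.integral_sum)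
    finally show ?thesis .
  qed
  then have "(\<Sum>\<tau><K. \<integral>\<omega>. (norm (gf (Wt \<omega>) - mean_lgrad \<tau> \<omega>))\<^sup>2 \<partial>M)
      \<le> (\<Sum>\<tau><K. sum_p_sq * L\<^sup>2 * (\<Sum>i\<in>{1..N}. \<integral>\<omega>. (norm (W i \<tau> \<omega> - Wt \<omega>))\<^sup>2 \<partial>M))"
    by (intro sum_mono) auto
  then show ?thesis by (simp add: sum_distrib_left[symmetric] sum.swap[where A="{..<K}"])
qed

lemma integral_direction_noise_squared_le:
  "(\<integral>\<omega>. (norm (direction_noise \<omega>))\<^sup>2 \<partial>M) \<le> sum_p_sq * N * K * sigma_l\<^sup>2"
proof -
  have noise_sum: "square_integrable M (\<lambda>\<omega>. \<Sum>\<tau><K. noise i \<tau> \<omega>)" if "i \<in> {1..N}" for i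
    using that by (intro square_integrable_sum square_integrable_noise) auto
  note int = square_integrable_norm_squared[OF noise_sum]
  have "(\<integral>\<omega>. (norm (direction_noise \<omega>))\<^sup>2 \<partial>M)
      \<le> (\<integral>\<omega>. sum_p_sq * (\<Sum>i\<in>{1..N}. (norm (\<Sum>\<tau><K. noise i \<tau> \<omega>))\<^sup>2) \<partial>M)"
    by (rule integral_mono[OF square_integrable_norm_squared[OF square_integrable_direction_noise]])
       (use int in \<open>auto intro!: Bochner_Integration.integrable_sum
         simp: direction_noise_def norm_sum_scaleR_squared_le\<close>)
  also have "\<dots> = sum_p_sq * (\<Sum>i\<in>{1..N}. \<integral>\<omega>. (norm (\<Sum>\<tau><K. noise i \<tau> \<omega>))\<^sup>2 \<partial>M)"
    using int by (simp add: Bochner_Integration.integral_sum)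
  also have "\<dots> \<le> sum_p_sq * (\<Sum>i\<in>{1..N}. K * sigma_l\<^sup>2)"
    by (intro mult_left_mono sum_mono integral_norm_sum_noise_squared_le) (auto simp: sum_nonneg)
  finally show ?thesis by simp
qed

lemma integral_direction_mean_squared_le:
  "(\<integral>\<omega>. (norm (direction_mean \<omega>))\<^sup>2 \<partial>M) \<le> K * (\<Sum>\<tau><K. \<integral>\<omega>. (norm (mean_lgrad \<tau> \<omega>))\<^sup>2 \<partial>M)"
proof -
  have int: "\<tau> \<in> {..<K} \<Longrightarrow> integrable M (\<lambda>\<omega>. (norm (mean_lgrad \<tau> \<omega>))\<^sup>2)" for \<tau>
    using square_integrable_norm_squared[OF square_integrable_mean_lgrad] by simp
  have "(\<integral>\<omega>. (norm (direction_mean \<omega>))\<^sup>2 \<partial>M) \<le> (\<integral>\<omega>. K * (\<Sum>\<tau><K. (norm (mean_lgrad \<tau> \<omega>))\<^sup>2) \<partial>M)"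
    by (rule integral_mono[OF square_integrable_norm_squared[OF square_integrable_direction_mean]])
       (use int in \<open>auto intro!: Bochner_Integration.integrable_sum
         simp: direction_mean_def norm_sum_squared_le_card[where I="{..<K}", simplified]\<close>)
  also have "\<dots> = K * (\<Sum>\<tau><K. \<integral>\<omega>. (norm (mean_lgrad \<tau> \<omega>))\<^sup>2 \<partial>M)"
    using int by (simp add: Bochner_Integration.integral_sum)
  finally show ?thesis .
qed

lemma integral_inner_direction_noise_mean_eq_0:
  assumes K1: "K = 1"
  shows "(\<integral>\<omega>. direction_noise \<omega> \<bullet> direction_mean \<omega> \<partial>M) = 0"
proof -
  have "direction_mean = (\<lambda>\<omega>. \<Sum>j\<in>{1..N}. p j *\<^sub>R gF j (Wt \<omega>))"
    by (rule ext) (simp only: direction_mean_def mean_lgrad_def, simp add: K1)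
  then have mean_past: "direction_mean \<in> borel_measurable (past M Wt X xi i 0)" if "i \<in> {1..N}" for i
    using that by (simp, intro borel_measurable_sum borel_measurable_scaleR borel_measurable_const
        measurable_compose[OF Wt_measurable_past gF_measurable]) auto
  have int: "integrable M (\<lambda>\<omega>. direction_mean \<omega> \<bullet> noise i 0 \<omega>)" if "i \<in> {1..N}" for i
    using integrable_inner_square_integrable[OF square_integrable_direction_mean
        square_integrable_noise[OF that]] K1 by simp
  have "(\<integral>\<omega>. direction_mean \<omega> \<bullet> direction_noise \<omega> \<partial>M)
      = (\<Sum>i\<in>{1..N}. p i * (\<integral>\<omega>. direction_mean \<omega> \<bullet> noise i 0 \<omega> \<partial>M))"
    unfolding direction_noise_def inner_sum_right inner_scaleR_right
    using K1 int by (simp add: Bochner_Integration.integral_sum)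
  also have "\<dots> = 0"
    using integral_inner_noise_eq_0[OF _ _ square_integrable_direction_mean mean_past] K1 by simp
  finally show ?thesis by (simp add: inner_commute)
qed

text \<open>For \<open>K = 1\<close> the weight \<open>K\<close> in front of the noise term is too small for Young's inequality;
  there the cross term vanishes instead, because the mean part only depends on \<open>W\<^sub>t\<close>.\<close>

lemma integral_direction_squared_le:
  "(\<integral>\<omega>. (norm (direction \<omega>))\<^sup>2 \<partial>M)
     \<le> K * (\<integral>\<omega>. (norm (direction_noise \<omega>))\<^sup>2 \<partial>M) + 2 * (\<integral>\<omega>. (norm (direction_mean \<omega>))\<^sup>2 \<partial>M)"
proof (cases "K = 1")
  case True
  have "(\<integral>\<omega>. (norm (direction \<omega>))\<^sup>2 \<partial>M) = (\<integral>\<omega>. (norm (direction_noise \<omega>))\<^sup>2 \<partial>M)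
      + 2 * (\<integral>\<omega>. direction_noise \<omega> \<bullet> direction_mean \<omega> \<partial>M) + (\<integral>\<omega>. (norm (direction_mean \<omega>))\<^sup>2 \<partial>M)"
    unfolding direction_eq norm_add_squared
    using square_integrable_norm_squared[OF square_integrable_direction_noise]
      square_integrable_norm_squared[OF square_integrable_direction_mean]
      integrable_inner_square_integrable[OF square_integrable_direction_noise square_integrable_direction_mean]
    by simp
  then show ?thesis using integral_inner_direction_noise_mean_eq_0 True by simp
next
  case False
  then have K2: "real K \<ge> 2" using K_pos by simp
  have bound: "(norm (direction \<omega>))\<^sup>2 \<le> K * (norm (direction_noise \<omega>))\<^sup>2 + 2 * (norm (direction_mean \<omega>))\<^sup>2" for \<omega>
  proof -
    have "(norm (direction \<omega>))\<^sup>2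
        \<le> (1 + (real K - 1)) * (norm (direction_noise \<omega>))\<^sup>2 + (1 + 1 / (real K - 1)) * (norm (direction_mean \<omega>))\<^sup>2"
      unfolding direction_eq by (rule norm_add_squared_le_weighted) (use K2 in simp)
    moreover have "(1 + 1 / (real K - 1)) * (norm (direction_mean \<omega>))\<^sup>2 \<le> 2 * (norm (direction_mean \<omega>))\<^sup>2"
      using K2 by (intro mult_right_mono) auto
    ultimately show ?thesis by simp
  qed
  note ints = square_integrable_norm_squared[OF square_integrable_direction_noise]
    square_integrable_norm_squared[OF square_integrable_direction_mean]
  have "(\<integral>\<omega>. (norm (direction \<omega>))\<^sup>2 \<partial>M)
      \<le> (\<integral>\<omega>. K * (norm (direction_noise \<omega>))\<^sup>2 + 2 * (norm (direction_mean \<omega>))\<^sup>2 \<partial>M)"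
    by (rule integral_mono[OF square_integrable_norm_squared[OF square_integrable_direction] _ bound])
       (use ints in auto)
  also have "\<dots> = K * (\<integral>\<omega>. (norm (direction_noise \<omega>))\<^sup>2 \<partial>M) + 2 * (\<integral>\<omega>. (norm (direction_mean \<omega>))\<^sup>2 \<partial>M)"
    using ints by simp
  finally show ?thesis .
qed

lemma total_deviation_le:
  "(\<Sum>\<tau><K. \<integral>\<omega>. (norm (gf (Wt \<omega>) - mean_lgrad \<tau> \<omega>))\<^sup>2 \<partial>M)
     \<le> sum_p_sq * L\<^sup>2 * (N * (3 * eta\<^sup>2 * K\<^sup>2 * (sigma_l\<^sup>2 + 6 * K * sigma_g\<^sup>2 + 6 * K * grad_moment)))"
proof -
  have "(\<Sum>i\<in>{1..N}. \<Sum>\<tau><K. \<integral>\<omega>. (norm (W i \<tau> \<omega> - Wt \<omega>))\<^sup>2 \<partial>M)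
      \<le> (\<Sum>i\<in>{1..N}. 3 * eta\<^sup>2 * K\<^sup>2 * (sigma_l\<^sup>2 + 6 * K * sigma_g\<^sup>2 + 6 * K * grad_moment))"
    by (rule sum_mono) (rule local_drift_le)
  from mult_left_mono[OF this, of "sum_p_sq * L\<^sup>2"] show ?thesis
    using integral_gf_minus_mean_lgrad_squared_le by (simp add: sum_nonneg)
qed

lemma integral_direction_squared_le_moments:
  "(\<integral>\<omega>. (norm (direction \<omega>))\<^sup>2 \<partial>M)
     \<le> K * (sum_p_sq * N * K * sigma_l\<^sup>2) + 2 * (K * (\<Sum>\<tau><K. \<integral>\<omega>. (norm (mean_lgrad \<tau> \<omega>))\<^sup>2 \<partial>M))"
proof -
  have "K * (\<integral>\<omega>. (norm (direction_noise \<omega>))\<^sup>2 \<partial>M) \<le> K * (sum_p_sq * N * K * sigma_l\<^sup>2)"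
    by (rule mult_left_mono[OF integral_direction_noise_squared_le]) simp
  then show ?thesis
    using integral_direction_squared_le integral_direction_mean_squared_le by linarith
qed

lemma one_round_descent:
  "(\<integral>\<omega>. f (V_next G eta Wt xi p N K \<omega>) \<partial>M)
     \<le> (\<integral>\<omega>. f (Wt \<omega>) \<partial>M) - C * eta * K * grad_moment
       + 3/2 * L\<^sup>2 * eta^3 * K\<^sup>2 * N * (sigma_l\<^sup>2 + 6 * K * sigma_g\<^sup>2) * sum_p_sq
       + L * eta\<^sup>2 * K\<^sup>2 * N / 2 * sigma_l\<^sup>2 * sum_p_sq"
proof -
  define deviation where "deviation = (\<Sum>\<tau><K. \<integral>\<omega>. (norm (gf (Wt \<omega>) - mean_lgrad \<tau> \<omega>))\<^sup>2 \<partial>M)"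
  define mean_moment where "mean_moment = (\<Sum>\<tau><K. \<integral>\<omega>. (norm (mean_lgrad \<tau> \<omega>))\<^sup>2 \<partial>M)"
  define R where "R = sigma_l\<^sup>2 + 6 * K * sigma_g\<^sup>2 + 6 * K * grad_moment"
  have deviation_le: "deviation \<le> sum_p_sq * L\<^sup>2 * (N * (3 * eta\<^sup>2 * K\<^sup>2 * R))"
    unfolding deviation_def R_def by (rule total_deviation_le)
  have "(\<integral>\<omega>. (norm (direction \<omega>))\<^sup>2 \<partial>M) \<le> K * (sum_p_sq * N * K * sigma_l\<^sup>2) + 2 * (K * mean_moment)"
    unfolding mean_moment_def by (rule integral_direction_squared_le_moments)
  from mult_left_mono[OF this, of "L * eta\<^sup>2 / 2"]
  have direction_term: "L * eta\<^sup>2 / 2 * (\<integral>\<omega>. (norm (direction \<omega>))\<^sup>2 \<partial>M)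
      \<le> L * eta\<^sup>2 * K\<^sup>2 * N / 2 * sigma_l\<^sup>2 * sum_p_sq + (L * eta * K) * (eta * mean_moment)"
    using L_nonneg by (simp add: algebra_simps power2_eq_square)
  have "(L * eta * K) * (eta * mean_moment) \<le> 1/4 * (eta * mean_moment)"
    using LetaK_le eta_nonneg by (intro mult_right_mono) (auto simp: mean_moment_def sum_nonneg)
  moreover have "0 \<le> eta * mean_moment" using eta_nonneg by (simp add: mean_moment_def sum_nonneg)
  moreover have "eta / 2 * deviation \<le> eta / 2 * (sum_p_sq * L\<^sup>2 * (N * (3 * eta\<^sup>2 * K\<^sup>2 * R)))"
    using deviation_le eta_nonneg by (simp add: mult_left_mono)
  ultimately have "(\<integral>\<omega>. f (V_next G eta Wt xi p N K \<omega>) \<partial>M) \<le> (\<integral>\<omega>. f (Wt \<omega>) \<partial>M)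
      + eta / 2 * (sum_p_sq * L\<^sup>2 * (N * (3 * eta\<^sup>2 * K\<^sup>2 * R))) - eta / 2 * (K * grad_moment)
      + L * eta\<^sup>2 * K\<^sup>2 * N / 2 * sigma_l\<^sup>2 * sum_p_sq"
    using integral_f_V_next_le integral_inner_direction_eq direction_term
    unfolding deviation_def[symmetric] mean_moment_def[symmetric] by (simp add: algebra_simps)
  also have "\<dots> = (\<integral>\<omega>. f (Wt \<omega>) \<partial>M) - eta * K * grad_moment * (1/2 - 9 * L\<^sup>2 * eta\<^sup>2 * K\<^sup>2 * N * sum_p_sq)
       + 3/2 * L\<^sup>2 * eta^3 * K\<^sup>2 * N * (sigma_l\<^sup>2 + 6 * K * sigma_g\<^sup>2) * sum_p_sq
       + L * eta\<^sup>2 * K\<^sup>2 * N / 2 * sigma_l\<^sup>2 * sum_p_sq"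
    unfolding R_def by (simp add: algebra_simps power2_eq_square power3_eq_cube)
  also have "\<dots> \<le> (\<integral>\<omega>. f (Wt \<omega>) \<partial>M) - eta * K * grad_moment * C
       + 3/2 * L\<^sup>2 * eta^3 * K\<^sup>2 * N * (sigma_l\<^sup>2 + 6 * K * sigma_g\<^sup>2) * sum_p_sq
       + L * eta\<^sup>2 * K\<^sup>2 * N / 2 * sigma_l\<^sup>2 * sum_p_sq"
    using mult_left_mono[OF step1, of "eta * K * grad_moment"] eta_nonneg by simp
  finally show ?thesis by (simp add: algebra_simps)
qed

end

theorem lemma2:
  fixes M :: "'w measure" and X :: "'x measure"
    and N K :: nat and L eta C sigma_l sigma_g :: real
    and p :: "nat \<Rightarrow> real"
    and f :: "real^'k^'d \<Rightarrow> real" and gf :: "real^'k^'d \<Rightarrow> real^'k^'d"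
    and F :: "nat \<Rightarrow> real^'k^'d \<Rightarrow> real" and gF :: "nat \<Rightarrow> real^'k^'d \<Rightarrow> real^'k^'d"
    and ell :: "nat \<Rightarrow> 'x \<Rightarrow> real^'k^'d \<Rightarrow> real"
    and G :: "nat \<Rightarrow> real^'k^'d \<Rightarrow> 'x \<Rightarrow> real^'k^'d"
    and Wt :: "'w \<Rightarrow> real^'k^'d"
    and xi :: "nat \<Rightarrow> nat \<Rightarrow> 'w \<Rightarrow> 'x"
  assumes prob: "prob_space M"
    and N_pos: "N \<ge> 1" and K_pos: "K \<ge> 1"
    and p_nonneg: "\<And>i. i \<in> {1..N} \<Longrightarrow> p i \<ge> 0"
    and p_sum: "(\<Sum>i\<in>{1..N}. p i) = 1"
    and f_def: "\<And>W. f W = (\<Sum>i\<in>{1..N}. p i * F i W)"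
    (* differentiability; gf, gF i, G i _ x are the gradients *)
    and f_grad: "\<And>W. (f has_derivative (\<lambda>h. gf W \<bullet> h)) (at W)"
    and F_grad: "\<And>i W. i \<in> {1..N} \<Longrightarrow> (F i has_derivative (\<lambda>h. gF i W \<bullet> h)) (at W)"
    and ell_grad: "\<And>i x W. i \<in> {1..N} \<Longrightarrow>
                     (ell i x has_derivative (\<lambda>h. G i W x \<bullet> h)) (at W)"
    (* (A1) *)
    and A1_f: "\<And>W W'. norm (gf W - gf W') \<le> L * norm (W - W')"
    and A1_F: "\<And>i W W'. i \<in> {1..N} \<Longrightarrow> norm (gF i W - gF i W') \<le> L * norm (W - W')"
    and A1_ell: "\<And>i x W W'. i \<in> {1..N} \<Longrightarrow> norm (G i W x - G i W' x) \<le> L * norm (W - W')"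
    (* measurability of the random objects *)
    and Wt_meas: "Wt \<in> borel_measurable M"
    and xi_meas: "\<And>i \<tau>. i \<in> {1..N} \<Longrightarrow> \<tau> < K \<Longrightarrow> xi i \<tau> \<in> M \<rightarrow>\<^sub>M X"
    and G_meas: "\<And>i. i \<in> {1..N} \<Longrightarrow> (\<lambda>(W, x). G i W x) \<in> borel_measurable (borel \<Otimes>\<^sub>M X)"
    (* (A2): conditionally on the past, unbiased with bounded variance *)
    and A2_integrable: "\<And>i \<tau>. i \<in> {1..N} \<Longrightarrow> \<tau> < K \<Longrightarrow>
        integrable M (\<lambda>\<omega>. (norm (G i (loc_iter G eta Wt xi i \<tau> \<omega>) (xi i \<tau> \<omega>)))\<^sup>2)"
    and A2_unbiased: "\<And>i \<tau> v. i \<in> {1..N} \<Longrightarrow> \<tau> < K \<Longrightarrow>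
        AE \<omega> in M. real_cond_exp M (past M Wt X xi i \<tau>)
            (\<lambda>\<omega>. G i (loc_iter G eta Wt xi i \<tau> \<omega>) (xi i \<tau> \<omega>) \<bullet> v) \<omega>
          = gF i (loc_iter G eta Wt xi i \<tau> \<omega>) \<bullet> v"
    and A2_var: "\<And>i \<tau>. i \<in> {1..N} \<Longrightarrow> \<tau> < K \<Longrightarrow>
        AE \<omega> in M. real_cond_exp M (past M Wt X xi i \<tau>)
            (\<lambda>\<omega>. (norm (G i (loc_iter G eta Wt xi i \<tau> \<omega>) (xi i \<tau> \<omega>)
                          - gF i (loc_iter G eta Wt xi i \<tau> \<omega>)))\<^sup>2) \<omega>
          \<le> sigma_l\<^sup>2"
    (* (A3) *)
    and A3: "\<And>i W. i \<in> {1..N} \<Longrightarrow> (norm (gf W - gF i W))\<^sup>2 \<le> sigma_g\<^sup>2"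
    and sigma_g_pos: "sigma_g\<^sup>2 > 0"
    (* the expectations on the right-hand side exist *)
    and int_f: "integrable M (\<lambda>\<omega>. f (Wt \<omega>))"
    and int_grad: "integrable M (\<lambda>\<omega>. (norm (gf (Wt \<omega>)))\<^sup>2)"
    (* step-size conditions *)
    and C_pos: "C > 0"
    and step1: "1/2 - 9 * L\<^sup>2 * eta\<^sup>2 * K\<^sup>2 * N * (\<Sum>i\<in>{1..N}. (p i)\<^sup>2) \<ge> C"
    and step2: "L * eta\<^sup>2 * K / 2 - eta / 2 \<le> 0"
  shows "(\<integral>\<omega>. f (V_next G eta Wt xi p N K \<omega>) \<partial>M)
     \<le> (\<integral>\<omega>. f (Wt \<omega>) \<partial>M) - C * eta * K * (\<integral>\<omega>. (norm (gf (Wt \<omega>)))\<^sup>2 \<partial>M)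
       + 3/2 * L\<^sup>2 * eta^3 * K\<^sup>2 * N * (sigma_l\<^sup>2 + 6 * K * sigma_g\<^sup>2) * (\<Sum>i\<in>{1..N}. (p i)\<^sup>2)
       + L * eta\<^sup>2 * K\<^sup>2 * N / 2 * sigma_l\<^sup>2 * (\<Sum>i\<in>{1..N}. (p i)\<^sup>2)"
proof -
  interpret fedhl_round M X N K L eta sigma_l sigma_g C p f gf F gF G Wt xi
    by (rule fedhl_round.intro; fact)
  show ?thesis by (rule one_round_descent)
qed

end
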